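(* Let $X=\bigcap_{i=1}^mX_i\subseteq\mathbb{R}^n$ with each $X_i$ closed convex and $X$ nonempty, with some $D_X>0$ such that $\|u-v\|^2\le D_X^2$ for all $u,v\in X$. Let $F(x)=\mathbb{E}[F(x,\omega)]$ and assume: (A1) $F$ is $L$-Lipschitz continuous and monotone on $\mathbb{R}^n$; (A2) the solution set $X^*$ of VI$(X,F)$ is nonempty and compact and $\|F(x^* )\|\le C$ for all $x^*\in X^*$; (A4) the noise condition in the context holds with $\nu_1,\nu_2\ge0$; (A5) there is $\eta>0$ with $\|x-\Pi_X(x)\|^2\le\eta\max_i\|x-\Pi_{X_i}(x)\|^2$ for all $x$; (A6) $\inf_{k\ge0}P(l_k=i\mid\mathcal{F}_k)\ge\rho_i/m$ a.s. for each $i$, with $\rho_i\in(0,1]$; let $\rho=\min_i\rho_i$. Let $\{x_k\}$ be generated by (r-SSE): $x_{k+\frac12}=\Pi_{l_k}(x_k-\gamma_kF(x_k,\omega_k))$, $x_{k+1}=\Pi_{C_k}(x_k-\gamma_kF(x_{k+\frac12},\omega_{k+\frac12}))$, $C_k=\{y:(x_k-\gamma_kF(x_k,\omega_k)-x_{k+\frac12})^T(y-x_{k+\frac12})\le0\}$. Let $\beta\triangleq1-\frac{\rho^2}{64m^2\eta^2}$. Then: (a) if $\sum_k\gamma_k=\infty$ and $\sum_k\gamma_k^2<\infty$, then $\mathrm{dist}(x_k,X)\to0$ almost surely; (b) if $\gamma_k=1/k^{t/2}$ with $t\ge1$, then $\mathbb{E}[\mathrm{dist}(x_k,X)]\le\mathcal{O}(1/k^{t/2})$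 for any $k\ge\bar k$, where $\bar k\triangleq\left\lceil\frac{1}{1-(1-\beta/2)^{1/t}}-1\right\rceil$; (c) if $\gamma_k=1/k^{1/2}$ and $\bar x_{K,\bar k}\triangleq\frac{\sum_{k=\bar k+\lfloor K/2\rfloor}^{\bar k+K}\gamma_kx_k}{\sum_{k=\bar k+\lfloor K/2\rfloor}^{K+\bar k}\gamma_k}$ (with $\bar k$ as in (b) for $t=1$), then $\mathbb{E}[\mathrm{dist}(\bar x_{K,\bar k},X)]\le\mathcal{O}(1/\sqrt K)$.
   Context: VI$(X,F)$: find $x^*\in X$ with $F(x^* )^T(x-x^* )\ge0$ for all $x\in X$. $\Pi_S$ is Euclidean projection onto $S$; $\Pi_{l_k}$ onto the random set $X_{l_k}$; $\mathrm{dist}(x,X)=\min_{y\in X}\|x-y\|$. Noise condition (A4): with $\mathcal{F}_k$ the history up to iteration $k$ and $\mathcal{F}_{k+\frac12}=\mathcal{F}_k\cup\{F(x_k,\omega_k)\}$, the errors $w_k=F(x_k,\omega_k)-F(x_k)$, $w_{k+\frac12}=F(x_{k+\frac12},\omega_{k+\frac12})-F(x_{k+\frac12})$ have zero conditional mean given $\mathcal{F}_k$, resp. $\mathcal{F}_{k+\frac12}$, and conditional second moments at most $\nu_1^2\|x_k\|^2+\nu_2^2$, resp. $\nu_1^2\|x_{k+\frac12}\|^2+\nu_2^2$, a.s. *)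

theory Defs
  imports "HOL-Analysis.Analysis" "HOL-Probability.Probability"
begin

definition VI_sol :: "'a::real_inner set \<Rightarrow> ('a \<Rightarrow> 'a) \<Rightarrow> 'a set" where
  "VI_sol X F = {xs \<in> X. \<forall>y\<in>X. F xs \<bullet> (y - xs) \<ge> 0}"

definition rv_events :: "'w measure \<Rightarrow> ('w \<Rightarrow> 'b) \<Rightarrow> 'b measure \<Rightarrow> 'w set set" where
  "rv_events M f N = {f -` B \<inter> space M | B. B \<in> sets N}"

text \<open>History sigma-algebra F_k: generated by the sampled operator values
  G_j = F(x_j,omega_j), H_j = F(x_{j+1/2},omega_{j+1/2}) and the random indices l_j, j < k
  (the initial point is deterministic).\<close>
definition hist_F :: "'w measure \<Rightarrow> (nat \<Rightarrow> 'w \<Rightarrow> 'a::euclidean_space) \<Rightarrow> (nat \<Rightarrow> 'w \<Rightarrow> 'a)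
    \<Rightarrow> (nat \<Rightarrow> 'w \<Rightarrow> nat) \<Rightarrow> nat \<Rightarrow> 'w measure" where
  "hist_F M G H l k = sigma (space M)
     (\<Union>j<k. rv_events M (G j) borel \<union> rv_events M (H j) borel \<union> rv_events M (l j) (count_space UNIV))"

definition hist_Fh :: "'w measure \<Rightarrow> (nat \<Rightarrow> 'w \<Rightarrow> 'a::euclidean_space) \<Rightarrow> (nat \<Rightarrow> 'w \<Rightarrow> 'a)
    \<Rightarrow> (nat \<Rightarrow> 'w \<Rightarrow> nat) \<Rightarrow> nat \<Rightarrow> 'w measure" where
  "hist_Fh M G H l k = sigma (space M)
     ((\<Union>j<k. rv_events M (G j) borel \<union> rv_events M (H j) borel \<union> rv_events M (l j) (count_space UNIV))
      \<union> rv_events M (G k) borel \<union> rv_events M (l k) (count_space UNIV))"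

definition cond_mean_zero :: "'w measure \<Rightarrow> 'w measure \<Rightarrow> ('w \<Rightarrow> 'a::euclidean_space) \<Rightarrow> bool" where
  "cond_mean_zero M N w \<longleftrightarrow> integrable M w \<and>
     (\<forall>b\<in>Basis. AE \<omega> in M. real_cond_exp M N (\<lambda>\<omega>. w \<omega> \<bullet> b) \<omega> = 0)"

definition cond_second_moment_le :: "'w measure \<Rightarrow> 'w measure \<Rightarrow> ('w \<Rightarrow> 'a::euclidean_space)
    \<Rightarrow> ('w \<Rightarrow> 'a) \<Rightarrow> real \<Rightarrow> real \<Rightarrow> bool" where
  "cond_second_moment_le M N w z \<nu>1 \<nu>2 \<longleftrightarrow>
     (AE \<omega> in M. nn_cond_exp M N (\<lambda>\<omega>. ennreal ((norm (w \<omega>))\<^sup>2)) \<omega>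
                   \<le> ennreal (\<nu>1\<^sup>2 * (norm (z \<omega>))\<^sup>2 + \<nu>2\<^sup>2))"

definition kbar :: "real \<Rightarrow> real \<Rightarrow> nat" where
  "kbar \<beta> t = nat \<lceil>1 / (1 - (1 - \<beta> / 2) powr (1 / t)) - 1\<rceil>"

end

theory Submission
  imports Defs
begin

text \<open>Only feasibility is at stake, so the operator enters solely through the size of its
  samples. Both projections of an r-SSE step stay within \<open>O(\<gamma>_k)\<close> of the projection of
  \<open>x_k\<close> onto the sampled set \<open>X_{l_k} \<supseteq> X\<close>, so by the Pythagorean inequality
  \<open>dist(x_{k+1}, X)^2\<close> is at most \<open>(1 + \<epsilon>) (dist(x_k, X)^2 - ||x_k - \<Pi>_{l_k} x_k||^2)\<close>
  plus \<open>O(\<gamma>_k^2)\<close> sample terms. Each set is sampled with conditional probability at least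
  \<open>\<rho>/m\<close>, and by linear regularity the residuals of all sets together bound
  \<open>dist(x_k, X)^2 / \<eta>\<close>; hence in expectation a fixed fraction \<open>q = \<rho>/(m \<eta>)\<close> of the
  mean squared distance \<open>a_k\<close> is removed. The Lipschitz and noise bounds and the bounded
  diameter of \<open>X\<close> make the second moments of the samples affine in \<open>a_k\<close>, so
  \<open>a_{k+1} \<le> \<theta> a_k + \<gamma>_k^2 (B0 + B1 a_k)\<close> with \<open>\<theta> < 1\<close>. Such a perturbed contraction
  is summable when \<open>\<Sum> \<gamma>_k^2 < \<infinity>\<close>, which gives (a) by monotone convergence, and is
  \<open>O(\<gamma>_k^2)\<close> when \<open>\<gamma>_k^2\<close> decays polynomially, which gives (b) because
  \<open>E dist \<le> sqrt (E dist^2)\<close>; (c) follows from (b) by convexity of \<open>dist(\<cdot>, X)\<close>.\<close>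

section \<open>Projections onto convex sets\<close>

lemma sum_power2_le_weighted:
  fixes s t \<epsilon> :: real
  assumes "\<epsilon> > 0"
  shows "(s + t)\<^sup>2 \<le> (1 + \<epsilon>) * t\<^sup>2 + (1 + 1/\<epsilon>) * s\<^sup>2"
proof -
  have "0 \<le> (\<epsilon> * t - s)\<^sup>2 / \<epsilon>" using assms by simp
  also have "\<dots> = \<epsilon> * t\<^sup>2 - 2 * s * t + s\<^sup>2 / \<epsilon>"
    using assms by (simp add: power2_eq_square field_simps)
  finally show ?thesis by (simp add: power2_eq_square algebra_simps)
qed

lemma sum_power2_le:
  fixes s t :: real
  shows "(s + t)\<^sup>2 \<le> 2 * s\<^sup>2 + 2 * t\<^sup>2"
  using sum_power2_le_weighted[of 1 s t] by simp

lemma halfspace_convex_closed: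
  fixes a b :: "'a::euclidean_space"
  shows "convex {y. a \<bullet> (y - b) \<le> 0}" "closed {y. a \<bullet> (y - b) \<le> 0}"
proof -
  have "{y. a \<bullet> (y - b) \<le> 0} = {y. a \<bullet> y \<le> a \<bullet> b}" by (auto simp: inner_diff_right)
  then show "convex {y. a \<bullet> (y - b) \<le> 0}" "closed {y. a \<bullet> (y - b) \<le> 0}"
    by (simp_all add: convex_halfspace_le closed_halfspace_le)
qed

lemma closest_point_eqI:
  fixes S :: "'a::euclidean_space set"
  assumes S: "convex S" "closed S" and p: "p \<in> S"
    and obtuse: "\<And>w. w \<in> S \<Longrightarrow> (z - p) \<bullet> (w - p) \<le> 0"
  shows "closest_point S z = p"
proof -
  have "dist z p \<le> dist z w" if w: "w \<in> S" for w
  proof -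
    have "(norm (z - w))\<^sup>2 = (norm (z - p))\<^sup>2 + (norm (p - w))\<^sup>2 - 2 * ((z - p) \<bullet> (w - p))"
      using dot_norm[of "z - p" "p - w"] by (simp add: inner_diff_right)
    then have "(norm (z - p))\<^sup>2 \<le> (norm (z - w))\<^sup>2"
      using obtuse[OF w] zero_le_power2[of "norm (p - w)"] by linarith
    then show ?thesis by (simp add: dist_norm power2_le_iff_abs_le)
  qed
  then show ?thesis using closest_point_unique[OF S p] by auto
qed

lemma closest_point_halfspace:
  fixes a b z :: "'a::euclidean_space"
  shows "closest_point {y. a \<bullet> (y - b) \<le> 0} z =
    (if a = 0 then z else z - (max 0 (a \<bullet> (z - b)) / (a \<bullet> a)) *\<^sub>R a)"
proof (cases "a = 0")
  case True
  then show ?thesis by (simp add: closest_point_self)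
next
  case False
  define t where "t = max 0 (a \<bullet> (z - b)) / (a \<bullet> a)"
  define p where "p = z - t *\<^sub>R a"
  have "t \<ge> 0" unfolding t_def by simp
  have slack: "a \<bullet> (p - b) \<le> 0 \<and> t * (a \<bullet> (p - b)) = 0"
  proof (cases "a \<bullet> (z - b) \<le> 0")
    case True
    then show ?thesis unfolding p_def t_def by simp
  next
    case False
    with \<open>a \<noteq> 0\<close> have "t * (a \<bullet> a) = a \<bullet> (z - b)" unfolding t_def by simp
    then show ?thesis unfolding p_def by (simp add: algebra_simps)
  qed
  have "closest_point {y. a \<bullet> (y - b) \<le> 0} z = p"
  proof (rule closest_point_eqI[OF halfspace_convex_closed])
    show "p \<in> {y. a \<bullet> (y - b) \<le> 0}" using slack by simp
    fix w assume "w \<in> {y. a \<bullet> (y - b) \<le> 0}"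
    then have "t * (a \<bullet> (w - b)) \<le> 0" using \<open>t \<ge> 0\<close> by (simp add: mult_nonneg_nonpos)
    moreover have "(z - p) \<bullet> (w - p) = t * (a \<bullet> (w - b)) - t * (a \<bullet> (p - b))"
      unfolding p_def by (simp add: algebra_simps)
    ultimately show "(z - p) \<bullet> (w - p) \<le> 0" using slack by simp
  qed
  then show ?thesis using False unfolding p_def t_def by simp
qed

lemma closest_point_halfspace_self:
  fixes z p :: "'a::euclidean_space"
  shows "closest_point {y. (z - p) \<bullet> (y - p) \<le> 0} z = p"
  by (rule closest_point_eqI[OF halfspace_convex_closed]) auto

lemma closest_point_nonexpansive:
  fixes S :: "'a::euclidean_space set"
  assumes "convex S" "closed S" "S \<noteq> {}"
  shows "norm (closest_point S u - closest_point S v) \<le> norm (u - v)"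
  using closest_point_lipschitz[OF assms, of u v] by (simp add: dist_norm)

lemma closest_point_pythagoras:
  fixes S :: "'a::euclidean_space set"
  assumes "convex S" "closed S" "y \<in> S"
  shows "(norm (closest_point S v - y))\<^sup>2 \<le> (norm (v - y))\<^sup>2 - (norm (v - closest_point S v))\<^sup>2"
  using closest_point_dot[OF assms, of v]
    dot_norm[of "v - closest_point S v" "closest_point S v - y"]
  by (simp add: inner_diff_right)

lemma infdist_closest_point:
  fixes X :: "'a::euclidean_space set"
  assumes "closed X" "X \<noteq> {}"
  shows "infdist v X = norm (v - closest_point X v)"
  using setdist_closest_point[OF assms, of v] by (simp add: infdist_eq_setdist dist_norm)

lemma extragradient_step_near_projection:
  fixes S :: "'a::euclidean_space set"
  assumes S: "convex S" "closed S" "S \<noteq> {}" and \<gamma>: "\<gamma> \<ge> 0"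
    and xh: "xh = closest_point S (x - \<gamma> *\<^sub>R g)"
    and x': "x' = closest_point {y. (x - \<gamma> *\<^sub>R g - xh) \<bullet> (y - xh) \<le> 0} (x - \<gamma> *\<^sub>R h)"
  shows "norm (x' - closest_point S x) \<le> \<gamma> * (2 * norm g + norm h)"
proof -
  define C where "C = {y. (x - \<gamma> *\<^sub>R g - xh) \<bullet> (y - xh) \<le> 0}"
  have C: "convex C" "closed C" "C \<noteq> {}"
    unfolding C_def using halfspace_convex_closed by (auto intro!: exI[of _ xh])
  have "closest_point C (x - \<gamma> *\<^sub>R g) = xh"
    unfolding C_def by (rule closest_point_halfspace_self)
  then have "norm (x' - xh) \<le> norm ((x - \<gamma> *\<^sub>R h) - (x - \<gamma> *\<^sub>R g))"
    using closest_point_nonexpansive[OF C, of "x - \<gamma> *\<^sub>R h" "x - \<gamma> *\<^sub>R g"]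
    unfolding x' C_def[symmetric] by simp
  also have "\<dots> = norm (\<gamma> *\<^sub>R (g - h))" by (simp add: algebra_simps)
  also have "\<dots> \<le> \<gamma> * (norm g + norm h)"
    using \<gamma> by (simp add: mult_left_mono norm_triangle_ineq4)
  finally have "norm (x' - xh) \<le> \<gamma> * (norm g + norm h)" .
  moreover have "norm (xh - closest_point S x) \<le> \<gamma> * norm g"
    using closest_point_nonexpansive[OF S, of "x - \<gamma> *\<^sub>R g" x] \<gamma> unfolding xh by simp
  ultimately show ?thesis
    using norm_triangle_ineq[of "x' - xh" "xh - closest_point S x"] by (simp add: algebra_simps)
qed

lemma extragradient_step_infdist:
  fixes S X :: "'a::euclidean_space set"
  assumes S: "convex S" "closed S" and XS: "X \<subseteq> S"
    and X: "convex X" "closed X" "X \<noteq> {}"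
    and \<epsilon>: "\<epsilon> > 0" and \<gamma>: "\<gamma> \<ge> 0"
    and xh: "xh = closest_point S (x - \<gamma> *\<^sub>R g)"
    and x': "x' = closest_point {y. (x - \<gamma> *\<^sub>R g - xh) \<bullet> (y - xh) \<le> 0} (x - \<gamma> *\<^sub>R h)"
  shows "(infdist x' X)\<^sup>2 + (1 + \<epsilon>) * (norm (x - closest_point S x))\<^sup>2
       \<le> (1 + \<epsilon>) * (infdist x X)\<^sup>2 + (1 + 1/\<epsilon>) * (\<gamma>\<^sup>2 * (8 * (norm g)\<^sup>2 + 2 * (norm h)\<^sup>2))"
proof -
  define u where "u = closest_point S x"
  define c where "c = closest_point X x"
  have "c \<in> X" unfolding c_def using closest_point_in_set X by blast
  have "norm (x' - u) \<le> \<gamma> * (2 * norm g + norm h)"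
    unfolding u_def using XS X(3) by (intro extragradient_step_near_projection[OF S _ \<gamma> xh x']) auto
  then have "infdist x' X \<le> \<gamma> * (2 * norm g + norm h) + norm (u - c)"
    using infdist_le[OF \<open>c \<in> X\<close>, of x'] norm_triangle_ineq[of "x' - u" "u - c"]
    by (simp add: dist_norm)
  then have "(infdist x' X)\<^sup>2 \<le> (\<gamma> * (2 * norm g + norm h) + norm (u - c))\<^sup>2"
    by (simp add: power_mono infdist_nonneg)
  also have "\<dots> \<le> (1 + \<epsilon>) * (norm (u - c))\<^sup>2 + (1 + 1/\<epsilon>) * (\<gamma> * (2 * norm g + norm h))\<^sup>2"
    by (rule sum_power2_le_weighted[OF \<epsilon>])
  finally have "(infdist x' X)\<^sup>2
      \<le> (1 + \<epsilon>) * (norm (u - c))\<^sup>2 + (1 + 1/\<epsilon>) * (\<gamma> * (2 * norm g + norm h))\<^sup>2" .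
  moreover have "(1 + 1/\<epsilon>) * (\<gamma> * (2 * norm g + norm h))\<^sup>2
      \<le> (1 + 1/\<epsilon>) * (\<gamma>\<^sup>2 * (8 * (norm g)\<^sup>2 + 2 * (norm h)\<^sup>2))"
    using sum_power2_le[of "2 * norm g" "norm h"] \<epsilon>
    by (intro mult_left_mono) (simp_all add: power_mult_distrib mult_left_mono)
  moreover have "(1 + \<epsilon>) * (norm (u - c))\<^sup>2 \<le> (1 + \<epsilon>) * ((infdist x X)\<^sup>2 - (norm (x - u))\<^sup>2)"
    using closest_point_pythagoras[OF S, of c x] \<open>c \<in> X\<close> XS infdist_closest_point[OF X(2,3), of x] \<epsilon>
    unfolding u_def c_def by (intro mult_left_mono) auto
  moreover have "(1 + \<epsilon>) * ((infdist x X)\<^sup>2 - (norm (x - u))\<^sup>2)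
      = (1 + \<epsilon>) * (infdist x X)\<^sup>2 - (1 + \<epsilon>) * (norm (x - u))\<^sup>2"
    by (rule right_diff_distrib)
  ultimately show ?thesis unfolding u_def[symmetric] by linarith
qed

lemma infdist_convex_combination:
  fixes X :: "'a::euclidean_space set" and y :: "nat \<Rightarrow> 'a"
  assumes X: "convex X" "closed X" "X \<noteq> {}" and I: "finite I"
    and w: "\<forall>i\<in>I. 0 \<le> w i" "sum w I = 1"
  shows "infdist (\<Sum>i\<in>I. w i *\<^sub>R y i) X \<le> (\<Sum>i\<in>I. w i * infdist (y i) X)"
proof -
  define c where "c i = closest_point X (y i)" for i
  have "c i \<in> X" for i unfolding c_def using closest_point_in_set X by blast
  then have "(\<Sum>i\<in>I. w i *\<^sub>R c i) \<in> X" using convex_sum[OF I X(1) w(2)] w(1) by blast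
  then have "infdist (\<Sum>i\<in>I. w i *\<^sub>R y i) X \<le> dist (\<Sum>i\<in>I. w i *\<^sub>R y i) (\<Sum>i\<in>I. w i *\<^sub>R c i)"
    by (rule infdist_le)
  also have "\<dots> = norm (\<Sum>i\<in>I. w i *\<^sub>R (y i - c i))"
    by (simp add: dist_norm sum_subtractf scaleR_diff_right)
  also have "\<dots> \<le> (\<Sum>i\<in>I. norm (w i *\<^sub>R (y i - c i)))" by (rule norm_sum)
  also have "\<dots> = (\<Sum>i\<in>I. w i * infdist (y i) X)"
    using w(1) by (intro sum.cong) (auto simp: infdist_closest_point[OF X(2,3)] c_def)
  finally show ?thesis .
qed

lemma linear_regularity_constant_ge_1:
  fixes Xs :: "nat \<Rightarrow> 'a::euclidean_space set"
  assumes m: "m \<ge> 1" and X: "X = (\<Inter>i<m. Xs i)" "bounded X" "X \<noteq> {}"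
    and closed: "\<forall>i<m. closed (Xs i)"
    and \<eta>: "\<eta> > 0"
    and linreg: "\<forall>z. (norm (z - closest_point X z))\<^sup>2
                    \<le> \<eta> * Max ((\<lambda>i. (norm (z - closest_point (Xs i) z))\<^sup>2) ` {..<m})"
  shows "\<eta> \<ge> 1"
proof -
  have "X \<noteq> UNIV" using \<open>bounded X\<close> not_bounded_UNIV by metis
  then obtain z where "z \<notin> X" by blast
  define c where "c = closest_point X z"
  have "closed X" using closed unfolding X(1) by auto
  then have "c \<in> X" unfolding c_def using closest_point_in_set X(3) by blast
  then have "norm (z - c) > 0" using \<open>z \<notin> X\<close> by auto
  have "(norm (z - closest_point (Xs i) z))\<^sup>2 \<le> (norm (z - c))\<^sup>2" if "i < m" for i
    using closest_point_le[of "Xs i" c z] closed that \<open>c \<in> X\<close> unfolding X(1)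
    by (auto simp: dist_norm power_mono)
  then have "Max ((\<lambda>i. (norm (z - closest_point (Xs i) z))\<^sup>2) ` {..<m}) \<le> (norm (z - c))\<^sup>2"
    using m by (subst Max_le_iff) (auto simp: lessThan_empty_iff)
  then have "(norm (z - c))\<^sup>2 \<le> \<eta> * (norm (z - c))\<^sup>2"
    using linreg[rule_format, of z] \<eta> unfolding c_def by (smt (verit) mult_left_mono)
  then show ?thesis using \<open>norm (z - c) > 0\<close> by (metis mult_le_cancel_right1 zero_less_power)
qed

section \<open>Measurability and integration\<close>

lemma rv_events_subset_sets: "f \<in> measurable M N \<Longrightarrow> rv_events M f N \<subseteq> sets M"
  unfolding rv_events_def by (auto intro: measurable_sets)

lemma subalgebra_sigma:
  assumes "A \<subseteq> sets M"
  shows "subalgebra M (sigma (space M) A)"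
proof -
  have "A \<subseteq> Pow (space M)" using assms sets.sets_into_space by blast
  then show ?thesis unfolding subalgebra_def using assms by (simp add: sets.sigma_sets_subset)
qed

lemma measurable_sigma_rv_events:
  assumes "rv_events M f N \<subseteq> A" "A \<subseteq> sets M" "space N = UNIV"
  shows "f \<in> measurable (sigma (space M) A) N"
  unfolding measurable_def
proof safe
  have "A \<subseteq> Pow (space M)" using assms(2) sets.sets_into_space by blast
  fix B assume "B \<in> sets N"
  then have "f -` B \<inter> space M \<in> A" using assms(1) unfolding rv_events_def by blast
  then show "f -` B \<inter> space (sigma (space M) A) \<in> sets (sigma (space M) A)"
    using \<open>A \<subseteq> Pow (space M)\<close> by (simp add: sigma_sets.Basic)
qed (use assms(3) in simp)

lemma borel_measurable_closest_point_halfspace: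
  fixes a b z :: "'w \<Rightarrow> 'a::euclidean_space"
  assumes [measurable]: "a \<in> borel_measurable N" "b \<in> borel_measurable N" "z \<in> borel_measurable N"
  shows "(\<lambda>\<omega>. closest_point {y. a \<omega> \<bullet> (y - b \<omega>) \<le> 0} (z \<omega>)) \<in> borel_measurable N"
  unfolding closest_point_halfspace by measurable

lemma borel_measurable_closest_point_indexed:
  fixes v :: "'w \<Rightarrow> 'a::euclidean_space" and i :: "'w \<Rightarrow> nat"
  assumes v: "v \<in> borel_measurable N" and i: "i \<in> measurable N (count_space UNIV)"
    and S: "\<And>\<omega>. \<omega> \<in> space N \<Longrightarrow> convex (S (i \<omega>)) \<and> closed (S (i \<omega>)) \<and> S (i \<omega>) \<noteq> {}"
  shows "(\<lambda>\<omega>. closest_point (S (i \<omega>)) (v \<omega>)) \<in> borel_measurable N"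
proof -
  define P where "P j \<longleftrightarrow> convex (S j) \<and> closed (S j) \<and> S j \<noteq> {}" for j
  define f where "f j \<omega> = (if P j then closest_point (S j) (v \<omega>) else v \<omega>)" for j \<omega>
  have "(\<lambda>\<omega>. f (i \<omega>) \<omega>) \<in> borel_measurable N"
  proof (rule measurable_compose_countable[OF _ i])
    fix j :: nat
    have "P j \<Longrightarrow> closest_point (S j) \<in> borel_measurable borel"
      unfolding P_def by (intro borel_measurable_continuous_onI continuous_on_closest_point) auto
    then show "f j \<in> borel_measurable N"
      unfolding f_def using v by (cases "P j") (simp_all add: measurable_compose[OF v])
  qed
  moreover have "\<And>\<omega>. \<omega> \<in> space N \<Longrightarrow> f (i \<omega>) \<omega> = closest_point (S (i \<omega>)) (v \<omega>)"
    using S unfolding f_def P_def by simp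
  ultimately show ?thesis by (simp cong: measurable_cong)
qed

lemma borel_measurable_infdist[measurable]: "(\<lambda>v. infdist v A) \<in> borel_measurable borel"
  by (intro borel_measurable_continuous_onI continuous_intros)

lemma integrable_dominated:
  fixes f g :: "'w \<Rightarrow> real"
  assumes g: "integrable M g" and f: "f \<in> borel_measurable M"
    and le: "\<And>\<omega>. \<omega> \<in> space M \<Longrightarrow> 0 \<le> f \<omega> \<and> f \<omega> \<le> g \<omega>"
  shows "integrable M f" "(\<integral>\<omega>. f \<omega> \<partial>M) \<le> (\<integral>\<omega>. g \<omega> \<partial>M)"
proof -
  show "integrable M f"
    by (rule Bochner_Integration.integrable_bound[OF g f]) (use le in \<open>force intro!: AE_I2\<close>)
  then show "(\<integral>\<omega>. f \<omega> \<partial>M) \<le> (\<integral>\<omega>. g \<omega> \<partial>M)"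
    using g le by (intro integral_mono) auto
qed

lemma integrable_nn_integral_le:
  fixes f g :: "'w \<Rightarrow> real"
  assumes g: "integrable M g" and f[measurable]: "f \<in> borel_measurable M"
    and f_nonneg: "\<And>\<omega>. \<omega> \<in> space M \<Longrightarrow> 0 \<le> f \<omega>"
    and g_nonneg: "\<And>\<omega>. \<omega> \<in> space M \<Longrightarrow> 0 \<le> g \<omega>"
    and le: "(\<integral>\<^sup>+\<omega>. ennreal (f \<omega>) \<partial>M) \<le> (\<integral>\<^sup>+\<omega>. ennreal (g \<omega>) \<partial>M)"
  shows "integrable M f" "(\<integral>\<omega>. f \<omega> \<partial>M) \<le> (\<integral>\<omega>. g \<omega> \<partial>M)"
proof -
  have g_eq: "(\<integral>\<^sup>+\<omega>. ennreal (g \<omega>) \<partial>M) = ennreal (\<integral>\<omega>. g \<omega> \<partial>M)"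
    using g_nonneg by (intro nn_integral_eq_integral[OF g]) (auto intro!: AE_I2)
  have "(\<integral>\<^sup>+\<omega>. ennreal (norm (f \<omega>)) \<partial>M) = (\<integral>\<^sup>+\<omega>. ennreal (f \<omega>) \<partial>M)"
    using f_nonneg by (intro nn_integral_cong) auto
  also have "\<dots> < \<infinity>" using le g_eq by (simp add: le_less_trans)
  finally show f_int: "integrable M f" by (intro integrableI_bounded) auto
  have "(\<integral>\<^sup>+\<omega>. ennreal (f \<omega>) \<partial>M) = ennreal (\<integral>\<omega>. f \<omega> \<partial>M)"
    using f_nonneg by (intro nn_integral_eq_integral[OF f_int]) (auto intro!: AE_I2)
  with le g_eq have "ennreal (\<integral>\<omega>. f \<omega> \<partial>M) \<le> ennreal (\<integral>\<omega>. g \<omega> \<partial>M)" by simp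
  moreover have "(\<integral>\<omega>. g \<omega> \<partial>M) \<ge> 0" using g_nonneg by (intro integral_nonneg_AE) (auto intro!: AE_I2)
  ultimately show "(\<integral>\<omega>. f \<omega> \<partial>M) \<le> (\<integral>\<omega>. g \<omega> \<partial>M)" by simp
qed

lemma (in sigma_finite_subalgebra) nn_integral_le_of_nn_cond_exp_le:
  assumes [measurable]: "f \<in> borel_measurable M"
    and le: "AE \<omega> in M. nn_cond_exp M F f \<omega> \<le> g \<omega>"
  shows "(\<integral>\<^sup>+\<omega>. f \<omega> \<partial>M) \<le> (\<integral>\<^sup>+\<omega>. g \<omega> \<partial>M)"
proof -
  have "(\<integral>\<^sup>+\<omega>. f \<omega> \<partial>M) = (\<integral>\<^sup>+\<omega>. 1 * nn_cond_exp M F f \<omega> \<partial>M)"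
    using nn_cond_exp_intg[of "\<lambda>_. 1" f] by simp
  also have "\<dots> \<le> (\<integral>\<^sup>+\<omega>. g \<omega> \<partial>M)"
    using le by (intro nn_integral_mono_AE) auto
  finally show ?thesis .
qed

lemma (in sigma_finite_subalgebra) nn_integral_indicator_ge:
  assumes [measurable]: "g \<in> borel_measurable F" "A \<in> sets M"
    and cond_prob: "AE \<omega> in M. real_cond_exp M F (indicator A) \<omega> \<ge> p"
  shows "(\<integral>\<^sup>+\<omega>. g \<omega> \<partial>M) * ennreal p \<le> (\<integral>\<^sup>+\<omega>. g \<omega> * indicator A \<omega> \<partial>M)"
proof -
  have [measurable]: "g \<in> borel_measurable M" by (rule measurable_from_subalg[OF subalg]) simp
  have "AE \<omega> in M. ennreal p \<le> nn_cond_exp M F (\<lambda>\<omega>. ennreal (indicator A \<omega>)) \<omega>"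
    using cond_prob
  proof eventually_elim
    case (elim \<omega>)
    have "real_cond_exp M F (indicator A) \<omega>
        \<le> enn2real (nn_cond_exp M F (\<lambda>\<omega>. ennreal (indicator A \<omega>)) \<omega>)"
      unfolding real_cond_exp_def by simp
    with elim have "p \<le> enn2real (nn_cond_exp M F (\<lambda>\<omega>. ennreal (indicator A \<omega>)) \<omega>)"
      by linarith
    then have "ennreal p \<le> ennreal (enn2real (nn_cond_exp M F (\<lambda>\<omega>. ennreal (indicator A \<omega>)) \<omega>))"
      by (rule ennreal_leI)
    also have "\<dots> \<le> nn_cond_exp M F (\<lambda>\<omega>. ennreal (indicator A \<omega>)) \<omega>"
      by (simp add: ennreal_enn2real_if)
    finally show ?case .
  qed
  then have "(\<integral>\<^sup>+\<omega>. g \<omega> \<partial>M) * ennreal p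
      \<le> (\<integral>\<^sup>+\<omega>. g \<omega> * nn_cond_exp M F (\<lambda>\<omega>. ennreal (indicator A \<omega>)) \<omega> \<partial>M)"
    by (subst nn_integral_multc[symmetric]) (auto intro!: nn_integral_mono_AE mult_left_mono)
  also have "\<dots> = (\<integral>\<^sup>+\<omega>. g \<omega> * indicator A \<omega> \<partial>M)"
    by (subst nn_cond_exp_intg) (simp_all add: ennreal_indicator)
  finally show ?thesis .
qed

lemma (in finite_measure) sigma_finite_subalgebra_sigma:
  assumes "A \<subseteq> sets M"
  shows "sigma_finite_subalgebra M (sigma (space M) A)"
  by (rule finite_measure_subalgebra_is_sigma_finite)
    (simp add: finite_measure_subalgebra_def finite_measure_subalgebra_axioms_def
      subalgebra_sigma[OF assms] finite_measure_axioms)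

lemma (in prob_space) integral_le_of_integral_power2_le:
  fixes f :: "'a \<Rightarrow> real"
  assumes f[measurable]: "f \<in> borel_measurable M" and f_nonneg: "\<And>\<omega>. \<omega> \<in> space M \<Longrightarrow> 0 \<le> f \<omega>"
    and int: "integrable M (\<lambda>\<omega>. (f \<omega>)\<^sup>2)" and le: "(\<integral>\<omega>. (f \<omega>)\<^sup>2 \<partial>M) \<le> b\<^sup>2" and b: "b > 0"
  shows "integrable M f" "(\<integral>\<omega>. f \<omega> \<partial>M) \<le> b"
proof -
  have am_gm: "f \<omega> \<le> (f \<omega>)\<^sup>2 / (2 * b) + b / 2" for \<omega>
  proof -
    have "0 \<le> (f \<omega> - b)\<^sup>2" by simp
    then show ?thesis using b by (simp add: field_simps power2_eq_square)
  qed
  have int': "integrable M (\<lambda>\<omega>. (f \<omega>)\<^sup>2 / (2 * b) + b / 2)" using int by simp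
  show "integrable M f"
    using integrable_dominated(1)[OF int' f] am_gm f_nonneg by auto
  have "(\<integral>\<omega>. f \<omega> \<partial>M) \<le> (\<integral>\<omega>. (f \<omega>)\<^sup>2 / (2 * b) + b / 2 \<partial>M)"
    using integrable_dominated(2)[OF int' f] am_gm f_nonneg by auto
  also have "\<dots> = (\<integral>\<omega>. (f \<omega>)\<^sup>2 \<partial>M) / (2 * b) + b / 2" using int by (simp add: prob_space)
  also have "\<dots> \<le> b\<^sup>2 / (2 * b) + b / 2" using le b by (simp add: divide_right_mono)
  also have "\<dots> = b" using b by (simp add: power2_eq_square field_simps)
  finally show "(\<integral>\<omega>. f \<omega> \<partial>M) \<le> b" .
qed

lemma AE_summable_of_summable_integral:
  fixes f :: "nat \<Rightarrow> 'a \<Rightarrow> real"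
  assumes [measurable]: "\<And>k. f k \<in> borel_measurable M" and f_nonneg: "\<And>k \<omega>. 0 \<le> f k \<omega>"
    and int: "\<And>k. integrable M (f k)" and summable: "summable (\<lambda>k. \<integral>\<omega>. f k \<omega> \<partial>M)"
  shows "AE \<omega> in M. summable (\<lambda>k. f k \<omega>)"
proof -
  have "(\<integral>\<^sup>+\<omega>. (\<Sum>k. ennreal (f k \<omega>)) \<partial>M) = (\<Sum>k. \<integral>\<^sup>+\<omega>. ennreal (f k \<omega>) \<partial>M)"
    by (rule nn_integral_suminf) measurable
  also have "\<dots> = (\<Sum>k. ennreal (\<integral>\<omega>. f k \<omega> \<partial>M))"
    using int f_nonneg by (intro suminf_cong nn_integral_eq_integral) auto
  also have "\<dots> = ennreal (\<Sum>k. \<integral>\<omega>. f k \<omega> \<partial>M)"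
    using summable f_nonneg by (intro suminf_ennreal2) (auto intro: integral_nonneg_AE)
  finally have "(\<integral>\<^sup>+\<omega>. (\<Sum>k. ennreal (f k \<omega>)) \<partial>M) \<noteq> \<infinity>" by simp
  then have "AE \<omega> in M. (\<Sum>k. ennreal (f k \<omega>)) \<noteq> \<infinity>"
    by (intro nn_integral_PInf_AE) measurable
  then show ?thesis
    by (rule AE_mp) (auto intro!: AE_I2 summable_suminf_not_top f_nonneg)
qed

section \<open>Perturbed contractions\<close>

lemma inverse_powr_ratio_eventually:
  fixes r t :: real
  assumes "r > 1"
  shows "eventually (\<lambda>k. 1 / real k powr t \<le> r * (1 / real (Suc k) powr t)) sequentially"
proof -
  have "(\<lambda>k. (1 + 1 / real k) powr t) \<longlonglongrightarrow> (1 + 0) powr t"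
    by (intro tendsto_intros lim_inverse_n') auto
  then have "eventually (\<lambda>k. (1 + 1 / real k) powr t < r) sequentially"
    using assms by (intro order_tendstoD) auto
  then show ?thesis
    using eventually_ge_at_top[of 1]
  proof eventually_elim
    case (elim k)
    then have "real k > 0" by simp
    have "real (Suc k) = (1 + 1 / real k) * real k" using \<open>real k > 0\<close> by (simp add: field_simps)
    then have "real (Suc k) powr t = (1 + 1 / real k) powr t * real k powr t"
      by (simp add: powr_mult)
    also have "\<dots> \<le> r * real k powr t" using elim by (intro mult_right_mono) auto
    finally show ?case using \<open>real k > 0\<close> by (simp add: field_simps)
  qed
qed

locale perturbed_contraction =
  fixes a b :: "nat \<Rightarrow> real" and \<theta> B0 B1 :: real
  assumes a_nonneg: "\<And>k. 0 \<le> a k" and b_nonneg: "\<And>k. 0 \<le> b k"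
    and \<theta>: "0 \<le> \<theta>" "\<theta> < 1" and B: "0 \<le> B0" "0 \<le> B1"
    and recursion: "\<And>k. a (Suc k) \<le> \<theta> * a k + b k * (B0 + B1 * a k)"
begin

lemma eventually_contracting:
  assumes "b \<longlonglongrightarrow> 0"
  obtains K where "\<And>k. k \<ge> K \<Longrightarrow> a (Suc k) \<le> ((1 + \<theta>) / 2) * a k + B0 * b k"
proof -
  have "(\<lambda>k. b k * B1) \<longlonglongrightarrow> 0 * B1" by (intro tendsto_intros assms)
  then have "eventually (\<lambda>k. b k * B1 < (1 - \<theta>) / 2) sequentially"
    using \<theta> by (intro order_tendstoD) auto
  then obtain K where K: "\<And>k. k \<ge> K \<Longrightarrow> b k * B1 < (1 - \<theta>) / 2"
    by (auto simp: eventually_sequentially)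
  have "a (Suc k) \<le> ((1 + \<theta>) / 2) * a k + B0 * b k" if "k \<ge> K" for k
  proof -
    have "(b k * B1) * a k \<le> ((1 - \<theta>) / 2) * a k"
      using K[OF that] a_nonneg by (intro mult_right_mono) auto
    moreover have "b k * (B0 + B1 * a k) = B0 * b k + (b k * B1) * a k"
      by (simp add: algebra_simps)
    moreover have "\<theta> * a k + ((1 - \<theta>) / 2) * a k = ((1 + \<theta>) / 2) * a k"
      by (simp add: field_simps)
    ultimately show ?thesis using recursion[of k] by linarith
  qed
  then show ?thesis using that by blast
qed

lemma summable:
  assumes "summable b"
  shows "summable a"
proof -
  obtain K where K: "\<And>k. k \<ge> K \<Longrightarrow> a (Suc k) \<le> ((1 + \<theta>) / 2) * a k + B0 * b k"
    using eventually_contracting summable_LIMSEQ_zero[OF assms] by blast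
  define t where "t = (1 + \<theta>) / 2"
  have t: "0 \<le> t" "t < 1" unfolding t_def using \<theta> by auto
  define c where "c n = a (n + K)" for n
  define d where "d n = b (n + K)" for n
  have "summable d" unfolding d_def using assms by simp
  have c_nonneg: "0 \<le> c n" for n unfolding c_def using a_nonneg by simp
  have "(\<Sum>n<N. c n) \<le> (c 0 + B0 * suminf d) / (1 - t)" for N
  proof -
    have "(\<Sum>n<N. c (Suc n)) \<le> (\<Sum>n<N. t * c n + B0 * d n)"
      using K unfolding c_def d_def t_def by (intro sum_mono) simp
    also have "\<dots> = t * (\<Sum>n<N. c n) + B0 * (\<Sum>n<N. d n)"
      by (simp add: sum.distrib sum_distrib_left)
    also have "B0 * (\<Sum>n<N. d n) \<le> B0 * suminf d"
      using \<open>summable d\<close> b_nonneg B unfolding d_def by (intro mult_left_mono sum_le_suminf) auto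
    finally have "(\<Sum>n<Suc N. c n) \<le> c 0 + t * (\<Sum>n<N. c n) + B0 * suminf d"
      using sum.lessThan_Suc_shift[of c N] by linarith
    moreover have "(\<Sum>n<N. c n) \<le> (\<Sum>n<Suc N. c n)" using c_nonneg[of N] by simp
    ultimately have "(1 - t) * (\<Sum>n<N. c n) \<le> c 0 + B0 * suminf d"
      using t by (simp add: algebra_simps)
    then show ?thesis using t by (simp add: pos_le_divide_eq mult.commute)
  qed
  then have "summable c" by (rule summableI_nonneg_bounded[OF c_nonneg])
  then show ?thesis unfolding c_def by simp
qed

lemma eventually_le_const_times:
  assumes b_pos: "\<And>k. 0 < b k" and "b \<longlonglongrightarrow> 0"
    and ratio: "\<And>r. r > 1 \<Longrightarrow> eventually (\<lambda>k. b k \<le> r * b (Suc k)) sequentially"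
  obtains K c where "\<And>k. k \<ge> K \<Longrightarrow> a k \<le> c * b k"
proof -
  obtain K1 where K1: "\<And>k. k \<ge> K1 \<Longrightarrow> a (Suc k) \<le> ((1 + \<theta>) / 2) * a k + B0 * b k"
    using eventually_contracting \<open>b \<longlonglongrightarrow> 0\<close> by blast
  define t where "t = (1 + \<theta>) / 2"
  have t: "0 \<le> t" "t < 1" unfolding t_def using \<theta> by auto
  define r where "r = 2 / (1 + t)"
  have r: "r > 1" "t * r < 1" unfolding r_def using t by (auto simp: field_simps)
  obtain K2 where K2: "\<And>k. k \<ge> K2 \<Longrightarrow> b k \<le> r * b (Suc k)"
    using ratio[OF r(1)] by (auto simp: eventually_sequentially)
  define K where "K = max K1 K2"
  \<comment> \<open>\<open>c\<close> lies above the fixed point of \<open>c \<mapsto> (t c + B0) r\<close>, so \<open>a \<le> c b\<close> propagates from \<open>K\<close> on.\<close>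
  define c where "c = max (a K / b K) (B0 * r / (1 - t * r))"
  have "c \<ge> 0" unfolding c_def using B r by (simp add: le_max_iff_disj)
  have "a k \<le> c * b k" if "k \<ge> K" for k
    using that
  proof (induction k rule: dec_induct)
    case base
    have "a K / b K \<le> c" unfolding c_def by simp
    then show ?case using b_pos by (simp add: pos_divide_le_eq)
  next
    case (step k)
    have "a (Suc k) \<le> t * (c * b k) + B0 * b k"
      using K1[of k] step t unfolding K_def t_def by (smt (verit) max.bounded_iff mult_left_mono)
    also have "\<dots> = (t * c + B0) * b k" by (simp add: algebra_simps)
    also have "\<dots> \<le> (t * c + B0) * (r * b (Suc k))"
      using K2[of k] step(1) t \<open>c \<ge> 0\<close> B unfolding K_def by (intro mult_left_mono) auto
    also have "\<dots> = ((t * c + B0) * r) * b (Suc k)" by (simp add: algebra_simps)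
    also have "\<dots> \<le> c * b (Suc k)"
    proof (rule mult_right_mono)
      have "B0 * r / (1 - t * r) \<le> c" unfolding c_def by simp
      then show "(t * c + B0) * r \<le> c" using r by (simp add: pos_divide_le_eq algebra_simps)
    qed (use b_pos less_imp_le in blast)
    finally show ?case .
  qed
  then show ?thesis using that by blast
qed

lemma rate:
  assumes "\<And>k. 0 < b k" and "b \<longlonglongrightarrow> 0"
    and "\<And>r. r > 1 \<Longrightarrow> eventually (\<lambda>k. b k \<le> r * b (Suc k)) sequentially"
  obtains c where "\<And>k. a k \<le> c * b k"
proof -
  obtain K c1 where tail: "\<And>k. k \<ge> K \<Longrightarrow> a k \<le> c1 * b k"
    using eventually_le_const_times[OF assms] by blast
  define c2 where "c2 = (\<Sum>k<K. a k / b k)"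
  have head: "a k \<le> c2 * b k" if "k < K" for k
  proof -
    have "a k / b k \<le> c2" unfolding c2_def using that a_nonneg assms(1)
      by (intro member_le_sum) (auto intro: divide_nonneg_pos less_imp_le)
    then show ?thesis using assms(1) by (simp add: pos_divide_le_eq)
  qed
  have "a k \<le> max c1 c2 * b k" for k
  proof -
    have "a k \<le> c1 * b k \<or> a k \<le> c2 * b k" using head tail by (cases "k < K") auto
    moreover have "c1 * b k \<le> max c1 c2 * b k" "c2 * b k \<le> max c1 c2 * b k"
      using assms(1)[of k] by (simp_all add: mult_right_mono)
    ultimately show ?thesis by linarith
  qed
  then show ?thesis using that by blast
qed

end

section \<open>The r-SSE iteration\<close>

lemma kbar_ge_1:
  assumes \<beta>: "0 < \<beta>" "\<beta> < 2" and t: "0 < t"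
  shows "kbar \<beta> t \<ge> 1"
proof -
  define u where "u = (1 - \<beta> / 2) powr (1 / t)"
  have "0 < u" "u < 1" unfolding u_def using \<beta> t powr_less_mono2[of "1 / t" "1 - \<beta> / 2" 1]
    by auto
  then have "1 / (1 - u) > 1" by (simp add: field_simps)
  then have "(2::int) \<le> \<lceil>1 / (1 - u) - 1\<rceil> + 1" by (simp add: le_ceiling_iff)
  then show ?thesis unfolding kbar_def u_def[symmetric] by linarith
qed

locale rsse =
  fixes M :: "'w measure"
    and m :: nat and Xs :: "nat \<Rightarrow> 'a::euclidean_space set" and X :: "'a set"
    and D L \<nu>1 \<nu>2 \<eta> :: real and \<rho> :: "nat \<Rightarrow> real"
    and F :: "'a \<Rightarrow> 'a"
    and x xh G H :: "nat \<Rightarrow> 'w \<Rightarrow> 'a" and l :: "nat \<Rightarrow> 'w \<Rightarrow> nat"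
    and \<gamma> :: "nat \<Rightarrow> real" and x0 :: 'a
  assumes prob: "prob_space M"
    and m_pos: "m \<ge> 1"
    and X_def: "X = (\<Inter>i<m. Xs i)"
    and Xs_closed: "\<forall>i<m. closed (Xs i)" and Xs_convex: "\<forall>i<m. convex (Xs i)"
    and X_ne: "X \<noteq> {}"
    and D_pos: "D > 0" and diam: "\<forall>u\<in>X. \<forall>v\<in>X. (norm (u - v))\<^sup>2 \<le> D\<^sup>2"
    and Lip: "\<forall>u v. norm (F u - F v) \<le> L * norm (u - v)"
    and G_meas: "\<forall>k. G k \<in> borel_measurable M" and H_meas: "\<forall>k. H k \<in> borel_measurable M"
    and l_meas: "\<forall>k. l k \<in> measurable M (count_space UNIV)"
    and l_range: "\<forall>k. \<forall>\<omega>\<in>space M. l k \<omega> < m"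
    and noise1m: "\<forall>k. cond_second_moment_le M (hist_F M G H l k) (\<lambda>\<omega>. G k \<omega> - F (x k \<omega>)) (x k) \<nu>1 \<nu>2"
    and noise2m: "\<forall>k. cond_second_moment_le M (hist_Fh M G H l k) (\<lambda>\<omega>. H k \<omega> - F (xh k \<omega>)) (xh k) \<nu>1 \<nu>2"
    and \<eta>_pos: "\<eta> > 0"
    and linreg: "\<forall>z. (norm (z - closest_point X z))\<^sup>2
                    \<le> \<eta> * Max ((\<lambda>i. (norm (z - closest_point (Xs i) z))\<^sup>2) ` {..<m})"
    and \<rho>_range: "\<forall>i<m. 0 < \<rho> i \<and> \<rho> i \<le> 1"
    and sampling: "\<forall>i<m. \<forall>k. AE \<omega> in M.
                     real_cond_exp M (hist_F M G H l k) (indicator {\<omega>\<in>space M. l k \<omega> = i}) \<omega> \<ge> \<rho> i / m"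
    and \<gamma>_pos: "\<forall>k. \<gamma> k > 0"
    and x_init: "\<forall>\<omega>\<in>space M. x 0 \<omega> = x0"
    and step_half: "\<forall>k. \<forall>\<omega>\<in>space M.
                      xh k \<omega> = closest_point (Xs (l k \<omega>)) (x k \<omega> - \<gamma> k *\<^sub>R G k \<omega>)"
    and step_full: "\<forall>k. \<forall>\<omega>\<in>space M.
                      x (Suc k) \<omega> = closest_point
                        {y. (x k \<omega> - \<gamma> k *\<^sub>R G k \<omega> - xh k \<omega>) \<bullet> (y - xh k \<omega>) \<le> 0}
                        (x k \<omega> - \<gamma> k *\<^sub>R H k \<omega>)"
begin

sublocale prob_space M by (rule prob)

lemma X_closed: "closed X" and X_convex: "convex X" and X_subset: "i < m \<Longrightarrow> X \<subseteq> Xs i"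
  unfolding X_def using Xs_closed Xs_convex by (auto intro: convex_INT)

lemma Xs_proper: "i < m \<Longrightarrow> convex (Xs i) \<and> closed (Xs i) \<and> Xs i \<noteq> {}"
  using Xs_closed Xs_convex X_subset X_ne by blast

definition anchor :: 'a where "anchor = (SOME p. p \<in> X)"

lemma anchor_in_X: "anchor \<in> X"
  unfolding anchor_def using X_ne by (simp add: some_in_eq)

lemma norm_diff_anchor_le: "u \<in> X \<Longrightarrow> norm (u - anchor) \<le> D"
  using diam anchor_in_X D_pos by (simp add: power2_le_iff_abs_le)

lemma bounded_X: "bounded X"
proof (rule bounded_subset[OF bounded_cball])
  show "X \<subseteq> cball anchor D"
    using norm_diff_anchor_le by (auto simp: dist_norm norm_minus_commute)
qed

lemma \<eta>_ge_1: "\<eta> \<ge> 1"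
  using linear_regularity_constant_ge_1[OF m_pos X_def bounded_X X_ne Xs_closed \<eta>_pos linreg] .

lemma space_hist_F[simp]: "space (hist_F M G H l k) = space M"
  unfolding hist_F_def by (simp add: space_measure_of_conv)

lemma hist_F_generators_sets:
  "(\<Union>j<k. rv_events M (G j) borel \<union> rv_events M (H j) borel \<union> rv_events M (l j) (count_space UNIV))
     \<subseteq> sets M"
  using G_meas H_meas l_meas by (auto dest!: rv_events_subset_sets)

lemma sigma_finite_hist_F: "sigma_finite_subalgebra M (hist_F M G H l k)"
  unfolding hist_F_def by (rule sigma_finite_subalgebra_sigma[OF hist_F_generators_sets])

lemma sigma_finite_hist_Fh: "sigma_finite_subalgebra M (hist_Fh M G H l k)"
  unfolding hist_Fh_def using hist_F_generators_sets[of k] G_meas l_meas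
  by (intro sigma_finite_subalgebra_sigma) (auto dest!: rv_events_subset_sets)

lemma measurable_hist_F:
  assumes "j < k"
  shows "G j \<in> borel_measurable (hist_F M G H l k)" "H j \<in> borel_measurable (hist_F M G H l k)"
    "l j \<in> measurable (hist_F M G H l k) (count_space UNIV)"
  unfolding hist_F_def using assms
  by (auto intro!: measurable_sigma_rv_events[OF _ hist_F_generators_sets])

lemma x_measurable_hist_F: "k \<le> K \<Longrightarrow> x k \<in> borel_measurable (hist_F M G H l K)"
proof (induction k)
  case 0
  have "(\<lambda>_. x0) \<in> borel_measurable (hist_F M G H l K)" by simp
  then show ?case using x_init measurable_cong[of "hist_F M G H l K" "x 0"] by simp
next
  case (Suc k)
  then have [measurable]: "x k \<in> borel_measurable (hist_F M G H l K)"
    "G k \<in> borel_measurable (hist_F M G H l K)" "H k \<in> borel_measurable (hist_F M G H l K)"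
    using measurable_hist_F[of k K] by simp_all
  have "(\<lambda>\<omega>. closest_point (Xs (l k \<omega>)) (x k \<omega> - \<gamma> k *\<^sub>R G k \<omega>))
      \<in> borel_measurable (hist_F M G H l K)"
    using measurable_hist_F(3)[of k K] Suc.prems l_range Xs_proper
    by (intro borel_measurable_closest_point_indexed) auto
  then have [measurable]: "xh k \<in> borel_measurable (hist_F M G H l K)"
    using step_half measurable_cong[of "hist_F M G H l K" "xh k"] by simp
  have "(\<lambda>\<omega>. closest_point {y. (x k \<omega> - \<gamma> k *\<^sub>R G k \<omega> - xh k \<omega>) \<bullet> (y - xh k \<omega>) \<le> 0}
      (x k \<omega> - \<gamma> k *\<^sub>R H k \<omega>)) \<in> borel_measurable (hist_F M G H l K)"
    by (intro borel_measurable_closest_point_halfspace) measurable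
  then show ?case
    using step_full measurable_cong[of "hist_F M G H l K" "x (Suc k)"] by simp
qed

lemma x_measurable[measurable]: "x k \<in> borel_measurable M"
  using measurable_from_subalg[OF sigma_finite_subalgebra.subalg[OF sigma_finite_hist_F]
      x_measurable_hist_F[OF order_refl]] .

lemma G_measurable[measurable]: "G k \<in> borel_measurable M"
  and H_measurable[measurable]: "H k \<in> borel_measurable M"
  and l_measurable[measurable]: "l k \<in> measurable M (count_space UNIV)"
  using G_meas H_meas l_meas by simp_all

lemma closest_point_Xs_l_measurable[measurable]:
  assumes [measurable]: "v \<in> borel_measurable M"
  shows "(\<lambda>\<omega>. closest_point (Xs (l k \<omega>)) (v \<omega>)) \<in> borel_measurable M"
  using l_range Xs_proper by (intro borel_measurable_closest_point_indexed) auto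

lemma xh_measurable[measurable]: "xh k \<in> borel_measurable M"
proof -
  have "(\<lambda>\<omega>. closest_point (Xs (l k \<omega>)) (x k \<omega> - \<gamma> k *\<^sub>R G k \<omega>)) \<in> borel_measurable M"
    by measurable
  then show ?thesis using step_half measurable_cong[of M "xh k"] by simp
qed

lemma F_measurable[measurable]: "F \<in> borel_measurable borel"
proof -
  have "norm (F u - F v) \<le> max L 0 * norm (u - v)" for u v
    using Lip[rule_format, of u v] by (smt (verit) max.cobounded1 mult_right_mono norm_ge_zero)
  then have "(max L 0)-lipschitz_on UNIV F"
    unfolding lipschitz_on_def dist_norm by simp
  then show ?thesis
    by (intro borel_measurable_continuous_onI lipschitz_on_continuous_on)
qed

definition dist_X :: "nat \<Rightarrow> 'w \<Rightarrow> real" where "dist_X k \<omega> = infdist (x k \<omega>) X"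
definition proj_residual :: "nat \<Rightarrow> 'a \<Rightarrow> real"
  where "proj_residual i v = (norm (v - closest_point (Xs i) v))\<^sup>2"
definition mean_sq_dist :: "nat \<Rightarrow> real" where "mean_sq_dist k = (\<integral>\<omega>. (dist_X k \<omega>)\<^sup>2 \<partial>M)"
definition \<rho>min :: real where "\<rho>min = Min (\<rho> ` {..<m})"
definition q :: real where "q = \<rho>min / (m * \<eta>)"

lemma dist_X_measurable[measurable]: "dist_X k \<in> borel_measurable M"
  unfolding dist_X_def by measurable

lemma \<rho>min_pos: "\<rho>min > 0" and \<rho>min_le: "i < m \<Longrightarrow> \<rho>min \<le> \<rho> i"
  unfolding \<rho>min_def using m_pos \<rho>_range by (auto simp: Min_gr_iff lessThan_empty_iff)

lemma q_pos: "q > 0"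
  unfolding q_def using \<rho>min_pos \<eta>_pos m_pos by simp

lemma dist_X_step:
  assumes \<omega>: "\<omega> \<in> space M" and \<epsilon>: "\<epsilon> > 0"
  shows "(dist_X (Suc k) \<omega>)\<^sup>2 + (1 + \<epsilon>) * proj_residual (l k \<omega>) (x k \<omega>)
     \<le> (1 + \<epsilon>) * (dist_X k \<omega>)\<^sup>2
       + (1 + 1/\<epsilon>) * ((\<gamma> k)\<^sup>2 * (8 * (norm (G k \<omega>))\<^sup>2 + 2 * (norm (H k \<omega>))\<^sup>2))"
proof -
  have "l k \<omega> < m" using l_range \<omega> by auto
  then show ?thesis
    unfolding dist_X_def proj_residual_def
    using extragradient_step_infdist[OF _ _ X_subset X_convex X_closed X_ne \<epsilon> _
        step_half[rule_format, OF \<omega>] step_full[rule_format, OF \<omega>]] Xs_proper \<gamma>_pos by (simp add: less_imp_le)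
qed

lemma infdist_sq_le_sum_proj_residual: "(infdist v X)\<^sup>2 \<le> \<eta> * (\<Sum>i<m. proj_residual i v)"
proof -
  have "Max ((\<lambda>i. proj_residual i v) ` {..<m}) \<le> (\<Sum>i<m. proj_residual i v)"
    using m_pos
    by (subst Max_le_iff) (auto simp: lessThan_empty_iff proj_residual_def intro: member_le_sum)
  moreover have "(infdist v X)\<^sup>2 \<le> \<eta> * Max ((\<lambda>i. proj_residual i v) ` {..<m})"
    using linreg infdist_closest_point[OF X_closed X_ne, of v] unfolding proj_residual_def by simp
  ultimately show ?thesis using \<eta>_pos by (smt (verit) mult_left_mono)
qed

lemma proj_residual_measurable_hist_F:
  assumes "i < m"
  shows "(\<lambda>\<omega>. proj_residual i (x k \<omega>)) \<in> borel_measurable (hist_F M G H l k)"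
proof -
  have "proj_residual i \<in> borel_measurable borel"
    unfolding proj_residual_def using Xs_proper[OF assms]
    by (intro borel_measurable_continuous_onI continuous_intros continuous_on_closest_point) auto
  then show ?thesis using x_measurable_hist_F[OF order_refl] by measurable
qed

lemma proj_residual_measurable[measurable]:
  "i < m \<Longrightarrow> (\<lambda>\<omega>. proj_residual i (x k \<omega>)) \<in> borel_measurable M"
  using measurable_from_subalg[OF sigma_finite_subalgebra.subalg[OF sigma_finite_hist_F]
      proj_residual_measurable_hist_F] .

lemma proj_residual_l_measurable[measurable]:
  "(\<lambda>\<omega>. proj_residual (l k \<omega>) (x k \<omega>)) \<in> borel_measurable M"
  unfolding proj_residual_def by measurable

lemma ennreal_dist_X_sq_q_le:
  "ennreal ((dist_X k \<omega>)\<^sup>2 * q) \<le> (\<Sum>i<m. ennreal (proj_residual i (x k \<omega>))) * ennreal (\<rho>min / m)"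
proof -
  have "(dist_X k \<omega>)\<^sup>2 * q \<le> (\<eta> * (\<Sum>i<m. proj_residual i (x k \<omega>))) * (\<rho>min / (m * \<eta>))"
    using infdist_sq_le_sum_proj_residual q_pos unfolding dist_X_def q_def
    by (intro mult_right_mono) auto
  also have "\<dots> = (\<Sum>i<m. proj_residual i (x k \<omega>)) * (\<rho>min / m)" using \<eta>_pos by simp
  finally have "ennreal ((dist_X k \<omega>)\<^sup>2 * q)
      \<le> ennreal ((\<Sum>i<m. proj_residual i (x k \<omega>)) * (\<rho>min / m))"
    by (rule ennreal_leI)
  also have "\<dots> = ennreal (\<Sum>i<m. proj_residual i (x k \<omega>)) * ennreal (\<rho>min / m)"
    using \<rho>min_pos by (intro ennreal_mult) (auto simp: proj_residual_def intro: sum_nonneg)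
  also have "ennreal (\<Sum>i<m. proj_residual i (x k \<omega>)) = (\<Sum>i<m. ennreal (proj_residual i (x k \<omega>)))"
    by (simp add: sum_ennreal proj_residual_def)
  finally show ?thesis .
qed

lemma nn_integral_sampled_proj_residual:
  "(\<integral>\<^sup>+\<omega>. ennreal (proj_residual (l k \<omega>) (x k \<omega>)) \<partial>M)
     = (\<Sum>i<m. \<integral>\<^sup>+\<omega>. ennreal (proj_residual i (x k \<omega>)) * indicator {\<omega>\<in>space M. l k \<omega> = i} \<omega> \<partial>M)"
proof -
  have "ennreal (proj_residual (l k \<omega>) (x k \<omega>))
      = (\<Sum>i<m. ennreal (proj_residual i (x k \<omega>)) * indicator {\<omega>\<in>space M. l k \<omega> = i} \<omega>)"
    if "\<omega> \<in> space M" for \<omega>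
  proof -
    have "(\<Sum>i<m. ennreal (proj_residual i (x k \<omega>)) * indicator {\<omega>\<in>space M. l k \<omega> = i} \<omega>)
        = (\<Sum>i<m. if i = l k \<omega> then ennreal (proj_residual i (x k \<omega>)) else 0)"
      using that by (intro sum.cong) (auto simp: indicator_def)
    then show ?thesis using that l_range by simp
  qed
  then have "(\<integral>\<^sup>+\<omega>. ennreal (proj_residual (l k \<omega>) (x k \<omega>)) \<partial>M)
      = (\<integral>\<^sup>+\<omega>. (\<Sum>i<m. ennreal (proj_residual i (x k \<omega>)) * indicator {\<omega>\<in>space M. l k \<omega> = i} \<omega>) \<partial>M)"
    by (intro nn_integral_cong) simp
  also have "\<dots> = (\<Sum>i<m.
      \<integral>\<^sup>+\<omega>. ennreal (proj_residual i (x k \<omega>)) * indicator {\<omega>\<in>space M. l k \<omega> = i} \<omega> \<partial>M)"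
    by (rule nn_integral_sum) auto
  finally show ?thesis .
qed

text \<open>This is where the sampling rule (A6) and linear regularity (A5) enter.\<close>

lemma nn_integral_proj_residual_ge:
  "(\<integral>\<^sup>+\<omega>. ennreal ((dist_X k \<omega>)\<^sup>2) \<partial>M) * ennreal q
     \<le> (\<integral>\<^sup>+\<omega>. ennreal (proj_residual (l k \<omega>) (x k \<omega>)) \<partial>M)"
proof -
  have "(\<integral>\<^sup>+\<omega>. ennreal ((dist_X k \<omega>)\<^sup>2) \<partial>M) * ennreal q
      = (\<integral>\<^sup>+\<omega>. ennreal ((dist_X k \<omega>)\<^sup>2 * q) \<partial>M)"
    using q_pos by (simp add: nn_integral_multc ennreal_mult)
  also have "\<dots> \<le> (\<integral>\<^sup>+\<omega>. (\<Sum>i<m. ennreal (proj_residual i (x k \<omega>))) * ennreal (\<rho>min / m) \<partial>M)"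
    by (intro nn_integral_mono ennreal_dist_X_sq_q_le)
  also have "\<dots> = (\<Sum>i<m. \<integral>\<^sup>+\<omega>. ennreal (proj_residual i (x k \<omega>)) * ennreal (\<rho>min / m) \<partial>M)"
    unfolding sum_distrib_right by (rule nn_integral_sum) auto
  also have "\<dots> = (\<Sum>i<m. (\<integral>\<^sup>+\<omega>. ennreal (proj_residual i (x k \<omega>)) \<partial>M) * ennreal (\<rho>min / m))"
    by (simp add: nn_integral_multc)
  also have "\<dots> \<le> (\<Sum>i<m. (\<integral>\<^sup>+\<omega>. ennreal (proj_residual i (x k \<omega>)) \<partial>M) * ennreal (\<rho> i / m))"
    using \<rho>min_le by (intro sum_mono mult_left_mono ennreal_leI divide_right_mono) auto
  also have "\<dots> \<le> (\<Sum>i<m.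
      \<integral>\<^sup>+\<omega>. ennreal (proj_residual i (x k \<omega>)) * indicator {\<omega>\<in>space M. l k \<omega> = i} \<omega> \<partial>M)"
    using sampling proj_residual_measurable_hist_F
    by (intro sum_mono sigma_finite_subalgebra.nn_integral_indicator_ge[OF sigma_finite_hist_F])
      auto
  also have "\<dots> = (\<integral>\<^sup>+\<omega>. ennreal (proj_residual (l k \<omega>) (x k \<omega>)) \<partial>M)"
    by (rule nn_integral_sampled_proj_residual[symmetric])
  finally show ?thesis .
qed

lemma proj_residual_le_dist_X_sq:
  assumes "\<omega> \<in> space M"
  shows "proj_residual (l k \<omega>) (x k \<omega>) \<le> (dist_X k \<omega>)\<^sup>2"
proof -
  have "l k \<omega> < m" using l_range assms by auto
  then have "closest_point X (x k \<omega>) \<in> Xs (l k \<omega>)"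
    using closest_point_in_set[OF X_closed X_ne] X_subset by blast
  then have "dist (x k \<omega>) (closest_point (Xs (l k \<omega>)) (x k \<omega>))
      \<le> dist (x k \<omega>) (closest_point X (x k \<omega>))"
    using closest_point_le Xs_proper[OF \<open>l k \<omega> < m\<close>] by blast
  then show ?thesis
    unfolding proj_residual_def dist_X_def infdist_closest_point[OF X_closed X_ne]
    by (simp add: dist_norm power_mono)
qed

definition c0 :: real where "c0 = 2 * \<nu>1\<^sup>2 * (norm anchor)\<^sup>2 + \<nu>2\<^sup>2 + 2 * (norm (F anchor))\<^sup>2"
definition c1 :: real where "c1 = 2 * \<nu>1\<^sup>2 + 2 * L\<^sup>2"

lemma c0_nonneg: "c0 \<ge> 0" and c1_nonneg: "c1 \<ge> 0"
  unfolding c0_def c1_def by simp_all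

lemma noise_bound_le: "\<nu>1\<^sup>2 * (norm v)\<^sup>2 + \<nu>2\<^sup>2 \<le> c0 + c1 * (norm (v - anchor))\<^sup>2"
proof -
  have "(norm v)\<^sup>2 \<le> (norm anchor + norm (v - anchor))\<^sup>2"
    using norm_triangle_sub[of v anchor] by (simp add: power_mono)
  also have "\<dots> \<le> 2 * (norm anchor)\<^sup>2 + 2 * (norm (v - anchor))\<^sup>2" by (rule sum_power2_le)
  finally have "\<nu>1\<^sup>2 * (norm v)\<^sup>2 \<le> \<nu>1\<^sup>2 * (2 * (norm anchor)\<^sup>2 + 2 * (norm (v - anchor))\<^sup>2)"
    by (simp add: mult_left_mono)
  then show ?thesis unfolding c0_def c1_def
    by (simp add: algebra_simps) (smt (verit) mult_nonneg_nonneg zero_le_power2)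
qed

lemma norm_F_sq_le: "(norm (F v))\<^sup>2 \<le> c0 + c1 * (norm (v - anchor))\<^sup>2"
proof -
  have "norm (F v) \<le> norm (F anchor) + L * norm (v - anchor)"
    using norm_triangle_sub[of "F v" "F anchor"] Lip by (smt (verit))
  then have "(norm (F v))\<^sup>2 \<le> (norm (F anchor) + L * norm (v - anchor))\<^sup>2" by (simp add: power_mono)
  also have "\<dots> \<le> 2 * (norm (F anchor))\<^sup>2 + 2 * L\<^sup>2 * (norm (v - anchor))\<^sup>2"
    using sum_power2_le[of "norm (F anchor)" "L * norm (v - anchor)"]
    by (simp add: power_mult_distrib)
  finally show ?thesis unfolding c0_def c1_def
    by (simp add: algebra_simps) (smt (verit) mult_nonneg_nonneg zero_le_power2)
qed

lemma norm_diff_anchor_sq_le: "(norm (v - anchor))\<^sup>2 \<le> 2 * (infdist v X)\<^sup>2 + 2 * D\<^sup>2"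
proof -
  have "closest_point X v \<in> X" using closest_point_in_set X_closed X_ne by blast
  then have "norm (v - anchor) \<le> infdist v X + D"
    using norm_triangle_sub[of "v - anchor" "closest_point X v - anchor"]
      norm_diff_anchor_le[of "closest_point X v"] infdist_closest_point[OF X_closed X_ne, of v]
    by simp
  then have "(norm (v - anchor))\<^sup>2 \<le> (infdist v X + D)\<^sup>2" by (simp add: power_mono)
  also have "\<dots> \<le> 2 * (infdist v X)\<^sup>2 + 2 * D\<^sup>2" by (rule sum_power2_le)
  finally show ?thesis .
qed

lemma norm_xh_diff_anchor_sq_le:
  assumes \<omega>: "\<omega> \<in> space M"
  shows "(norm (xh k \<omega> - anchor))\<^sup>2
    \<le> 2 * (norm (x k \<omega> - anchor))\<^sup>2 + 2 * ((\<gamma> k)\<^sup>2 * (norm (G k \<omega>))\<^sup>2)"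
proof -
  have "l k \<omega> < m" using l_range \<omega> by auto
  then have "anchor \<in> Xs (l k \<omega>)" using X_subset anchor_in_X by blast
  then have "norm (xh k \<omega> - anchor) \<le> norm ((x k \<omega> - \<gamma> k *\<^sub>R G k \<omega>) - anchor)"
    using step_half \<omega> closest_point_nonexpansive[of "Xs (l k \<omega>)" _ anchor] Xs_proper[OF \<open>l k \<omega> < m\<close>]
    by (auto simp: closest_point_self)
  also have "\<dots> \<le> norm (x k \<omega> - anchor) + \<gamma> k * norm (G k \<omega>)"
    using norm_triangle_ineq4[of "x k \<omega> - anchor" "\<gamma> k *\<^sub>R G k \<omega>"] \<gamma>_pos
    by (simp add: algebra_simps less_imp_le)
  finally have "(norm (xh k \<omega> - anchor))\<^sup>2 \<le> (norm (x k \<omega> - anchor) + \<gamma> k * norm (G k \<omega>))\<^sup>2"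
    by (simp add: power_mono)
  also have "\<dots> \<le> 2 * (norm (x k \<omega> - anchor))\<^sup>2 + 2 * ((\<gamma> k)\<^sup>2 * (norm (G k \<omega>))\<^sup>2)"
    using sum_power2_le[of "norm (x k \<omega> - anchor)" "\<gamma> k * norm (G k \<omega>)"]
    by (simp add: power_mult_distrib)
  finally show ?thesis .
qed

lemma sample_second_moment:
  assumes N: "sigma_finite_subalgebra M N"
    and [measurable]: "v \<in> borel_measurable M" "S \<in> borel_measurable M"
    and noise: "cond_second_moment_le M N (\<lambda>\<omega>. S \<omega> - F (v \<omega>)) v \<nu>1 \<nu>2"
    and int_V: "integrable M (\<lambda>\<omega>. (norm (v \<omega> - anchor))\<^sup>2)"
  shows "integrable M (\<lambda>\<omega>. (norm (S \<omega>))\<^sup>2)"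
    "(\<integral>\<omega>. (norm (S \<omega>))\<^sup>2 \<partial>M) \<le> 4 * c0 + 4 * c1 * (\<integral>\<omega>. (norm (v \<omega> - anchor))\<^sup>2 \<partial>M)"
proof -
  let ?V = "\<lambda>\<omega>. c0 + c1 * (norm (v \<omega> - anchor))\<^sup>2"
  let ?noise = "\<lambda>\<omega>. (norm (S \<omega> - F (v \<omega>)))\<^sup>2"
  let ?bound = "\<lambda>\<omega>. \<nu>1\<^sup>2 * (norm (v \<omega>))\<^sup>2 + \<nu>2\<^sup>2"
  have int_V': "integrable M ?V" using int_V by simp
  have EV: "(\<integral>\<omega>. ?V \<omega> \<partial>M) = c0 + c1 * (\<integral>\<omega>. (norm (v \<omega> - anchor))\<^sup>2 \<partial>M)"
    using int_V by (simp add: lebesgue_integral_const prob_space.prob_space[OF prob])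
  have bound: "integrable M ?bound" "(\<integral>\<omega>. ?bound \<omega> \<partial>M) \<le> (\<integral>\<omega>. ?V \<omega> \<partial>M)"
    using integrable_dominated[OF int_V', of ?bound] noise_bound_le by simp_all
  have "(\<lambda>\<omega>. ennreal (?noise \<omega>)) \<in> borel_measurable M" by measurable
  then have "(\<integral>\<^sup>+\<omega>. ennreal (?noise \<omega>) \<partial>M) \<le> (\<integral>\<^sup>+\<omega>. ennreal (?bound \<omega>) \<partial>M)"
    using noise unfolding cond_second_moment_le_def
    by (rule sigma_finite_subalgebra.nn_integral_le_of_nn_cond_exp_le[OF N])
  then have noise_int: "integrable M ?noise" "(\<integral>\<omega>. ?noise \<omega> \<partial>M) \<le> (\<integral>\<omega>. ?bound \<omega> \<partial>M)"
    using integrable_nn_integral_le[OF bound(1), of ?noise] by simp_all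
  have S_le: "(norm (S \<omega>))\<^sup>2 \<le> 2 * ?noise \<omega> + 2 * ?V \<omega>" for \<omega>
    using sum_power2_le[of "norm (S \<omega> - F (v \<omega>))" "norm (F (v \<omega>))"]
      norm_triangle_sub[of "S \<omega>" "F (v \<omega>)"] norm_F_sq_le[of "v \<omega>"]
    by (smt (verit) norm_ge_zero power_mono)
  have int_sum: "integrable M (\<lambda>\<omega>. 2 * ?noise \<omega> + 2 * ?V \<omega>)"
    by (intro Bochner_Integration.integrable_add integrable_mult_right noise_int(1) int_V')
  show "integrable M (\<lambda>\<omega>. (norm (S \<omega>))\<^sup>2)"
    using integrable_dominated(1)[OF int_sum, of "\<lambda>\<omega>. (norm (S \<omega>))\<^sup>2"] S_le by simp
  have "(\<integral>\<omega>. (norm (S \<omega>))\<^sup>2 \<partial>M) \<le> (\<integral>\<omega>. 2 * ?noise \<omega> + 2 * ?V \<omega> \<partial>M)"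
    using integrable_dominated(2)[OF int_sum, of "\<lambda>\<omega>. (norm (S \<omega>))\<^sup>2"] S_le by simp
  also have "\<dots> = 2 * (\<integral>\<omega>. ?noise \<omega> \<partial>M) + 2 * (\<integral>\<omega>. ?V \<omega> \<partial>M)"
    using noise_int(1) int_V'
    by (simp only: Bochner_Integration.integral_add integrable_mult_right integral_mult_right_zero)
  finally show "(\<integral>\<omega>. (norm (S \<omega>))\<^sup>2 \<partial>M) \<le> 4 * c0 + 4 * c1 * (\<integral>\<omega>. (norm (v \<omega> - anchor))\<^sup>2 \<partial>M)"
    using noise_int(2) bound(2) EV by linarith
qed

lemma mean_sq_dist_nonneg: "mean_sq_dist k \<ge> 0"
  unfolding mean_sq_dist_def by simp

lemma second_moment_x:
  assumes "integrable M (\<lambda>\<omega>. (dist_X k \<omega>)\<^sup>2)"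
  shows "integrable M (\<lambda>\<omega>. (norm (x k \<omega> - anchor))\<^sup>2)"
    "(\<integral>\<omega>. (norm (x k \<omega> - anchor))\<^sup>2 \<partial>M) \<le> 2 * mean_sq_dist k + 2 * D\<^sup>2"
proof -
  have int: "integrable M (\<lambda>\<omega>. 2 * (dist_X k \<omega>)\<^sup>2 + 2 * D\<^sup>2)" using assms by simp
  have "(\<lambda>\<omega>. (norm (x k \<omega> - anchor))\<^sup>2) \<in> borel_measurable M" by measurable
  note dom = integrable_dominated[OF int this]
  show "integrable M (\<lambda>\<omega>. (norm (x k \<omega> - anchor))\<^sup>2)"
    using dom(1) norm_diff_anchor_sq_le unfolding dist_X_def by simp
  have "(\<integral>\<omega>. (norm (x k \<omega> - anchor))\<^sup>2 \<partial>M) \<le> (\<integral>\<omega>. 2 * (dist_X k \<omega>)\<^sup>2 + 2 * D\<^sup>2 \<partial>M)"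
    using dom(2) norm_diff_anchor_sq_le unfolding dist_X_def by simp
  also have "\<dots> = 2 * mean_sq_dist k + 2 * D\<^sup>2"
    using assms unfolding mean_sq_dist_def
    by (simp add: lebesgue_integral_const prob_space.prob_space[OF prob])
  finally show "(\<integral>\<omega>. (norm (x k \<omega> - anchor))\<^sup>2 \<partial>M) \<le> 2 * mean_sq_dist k + 2 * D\<^sup>2" .
qed

lemma second_moment_G:
  assumes "integrable M (\<lambda>\<omega>. (dist_X k \<omega>)\<^sup>2)"
  shows "integrable M (\<lambda>\<omega>. (norm (G k \<omega>))\<^sup>2)"
    "(\<integral>\<omega>. (norm (G k \<omega>))\<^sup>2 \<partial>M) \<le> 4 * c0 + 4 * c1 * (2 * mean_sq_dist k + 2 * D\<^sup>2)"
proof -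
  note G = sample_second_moment[OF sigma_finite_hist_F x_measurable G_measurable
      noise1m[rule_format] second_moment_x(1)[OF assms]]
  show "integrable M (\<lambda>\<omega>. (norm (G k \<omega>))\<^sup>2)" by (fact G(1))
  show "(\<integral>\<omega>. (norm (G k \<omega>))\<^sup>2 \<partial>M) \<le> 4 * c0 + 4 * c1 * (2 * mean_sq_dist k + 2 * D\<^sup>2)"
    using G(2) second_moment_x(2)[OF assms] c1_nonneg by (smt (verit) mult_left_mono)
qed

lemma second_moment_H:
  assumes "integrable M (\<lambda>\<omega>. (dist_X k \<omega>)\<^sup>2)"
  shows "integrable M (\<lambda>\<omega>. (norm (H k \<omega>))\<^sup>2)"
    "(\<integral>\<omega>. (norm (H k \<omega>))\<^sup>2 \<partial>M)
       \<le> 4 * c0 + 4 * c1 * (4 * mean_sq_dist k + 4 * D\<^sup>2 + 2 * (\<gamma> k)\<^sup>2 * (\<integral>\<omega>. (norm (G k \<omega>))\<^sup>2 \<partial>M))"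
proof -
  note x = second_moment_x[OF assms] and G = second_moment_G[OF assms]
  have int: "integrable M (\<lambda>\<omega>. 2 * (norm (x k \<omega> - anchor))\<^sup>2 + 2 * ((\<gamma> k)\<^sup>2 * (norm (G k \<omega>))\<^sup>2))"
    using x(1) G(1) by simp
  have "(\<lambda>\<omega>. (norm (xh k \<omega> - anchor))\<^sup>2) \<in> borel_measurable M" by measurable
  note dom = integrable_dominated[OF int this]
  have xh: "integrable M (\<lambda>\<omega>. (norm (xh k \<omega> - anchor))\<^sup>2)"
    using dom(1) norm_xh_diff_anchor_sq_le by simp
  have "(\<integral>\<omega>. (norm (xh k \<omega> - anchor))\<^sup>2 \<partial>M)
      \<le> (\<integral>\<omega>. 2 * (norm (x k \<omega> - anchor))\<^sup>2 + 2 * ((\<gamma> k)\<^sup>2 * (norm (G k \<omega>))\<^sup>2) \<partial>M)"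
    using dom(2) norm_xh_diff_anchor_sq_le by simp
  also have "\<dots> \<le> 4 * mean_sq_dist k + 4 * D\<^sup>2 + 2 * (\<gamma> k)\<^sup>2 * (\<integral>\<omega>. (norm (G k \<omega>))\<^sup>2 \<partial>M)"
    using x G(1) by simp
  finally have Exh: "(\<integral>\<omega>. (norm (xh k \<omega> - anchor))\<^sup>2 \<partial>M)
      \<le> 4 * mean_sq_dist k + 4 * D\<^sup>2 + 2 * (\<gamma> k)\<^sup>2 * (\<integral>\<omega>. (norm (G k \<omega>))\<^sup>2 \<partial>M)" .
  note H = sample_second_moment[OF sigma_finite_hist_Fh xh_measurable H_measurable
      noise2m[rule_format] xh]
  show "integrable M (\<lambda>\<omega>. (norm (H k \<omega>))\<^sup>2)" by (fact H(1))
  show "(\<integral>\<omega>. (norm (H k \<omega>))\<^sup>2 \<partial>M)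
       \<le> 4 * c0 + 4 * c1 * (4 * mean_sq_dist k + 4 * D\<^sup>2 + 2 * (\<gamma> k)\<^sup>2 * (\<integral>\<omega>. (norm (G k \<omega>))\<^sup>2 \<partial>M))"
    using H(2) Exh c1_nonneg by (smt (verit) mult_left_mono)
qed

lemma integrable_dist_X_sq: "integrable M (\<lambda>\<omega>. (dist_X k \<omega>)\<^sup>2)"
proof (induction k)
  case 0
  have "integrable M (\<lambda>_. (infdist x0 X)\<^sup>2)" by simp
  moreover have "(\<lambda>\<omega>. (dist_X 0 \<omega>)\<^sup>2) \<in> borel_measurable M" by measurable
  moreover have "0 \<le> (dist_X 0 \<omega>)\<^sup>2 \<and> (dist_X 0 \<omega>)\<^sup>2 \<le> (infdist x0 X)\<^sup>2" if "\<omega> \<in> space M" for \<omega>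
    using x_init that by (simp add: dist_X_def)
  ultimately show ?case by (rule integrable_dominated(1))
next
  case (Suc k)
  let ?R = "\<lambda>\<omega>. 2 * (dist_X k \<omega>)\<^sup>2 + 2 * ((\<gamma> k)\<^sup>2 * (8 * (norm (G k \<omega>))\<^sup>2 + 2 * (norm (H k \<omega>))\<^sup>2))"
  have "integrable M ?R" using Suc second_moment_G(1)[OF Suc] second_moment_H(1)[OF Suc] by simp
  moreover have "(\<lambda>\<omega>. (dist_X (Suc k) \<omega>)\<^sup>2) \<in> borel_measurable M" by measurable
  moreover have "0 \<le> (dist_X (Suc k) \<omega>)\<^sup>2 \<and> (dist_X (Suc k) \<omega>)\<^sup>2 \<le> ?R \<omega>" if "\<omega> \<in> space M" for \<omega>
  proof -
    have "(dist_X (Suc k) \<omega>)\<^sup>2 + 2 * proj_residual (l k \<omega>) (x k \<omega>) \<le> ?R \<omega>"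
      using dist_X_step[OF that zero_less_one, of k] by simp
    moreover have "0 \<le> proj_residual (l k \<omega>) (x k \<omega>)" by (simp add: proj_residual_def)
    ultimately show ?thesis by simp
  qed
  ultimately show ?case by (rule integrable_dominated(1))
qed

lemma expected_proj_residual_ge:
  shows "integrable M (\<lambda>\<omega>. proj_residual (l k \<omega>) (x k \<omega>))"
    "q * mean_sq_dist k \<le> (\<integral>\<omega>. proj_residual (l k \<omega>) (x k \<omega>) \<partial>M)"
proof -
  have nonneg: "0 \<le> proj_residual i v" for i v by (simp add: proj_residual_def)
  show int: "integrable M (\<lambda>\<omega>. proj_residual (l k \<omega>) (x k \<omega>))"
    using integrable_dominated(1)[OF integrable_dist_X_sq proj_residual_l_measurable]
      proj_residual_le_dist_X_sq nonneg by blast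
  have "ennreal (mean_sq_dist k) * ennreal q \<le> ennreal (\<integral>\<omega>. proj_residual (l k \<omega>) (x k \<omega>) \<partial>M)"
    using nn_integral_proj_residual_ge[of k] integrable_dist_X_sq int nonneg
    unfolding mean_sq_dist_def
    by (simp add: nn_integral_eq_integral)
  moreover have "0 \<le> (\<integral>\<omega>. proj_residual (l k \<omega>) (x k \<omega>) \<partial>M)"
    using nonneg by (simp add: Bochner_Integration.integral_nonneg)
  ultimately show "q * mean_sq_dist k \<le> (\<integral>\<omega>. proj_residual (l k \<omega>) (x k \<omega>) \<partial>M)"
    using q_pos mean_sq_dist_nonneg by (simp add: ennreal_mult[symmetric] mult.commute)
qed

lemma mean_sq_dist_step:
  "mean_sq_dist (Suc k) \<le> (1 + q/2) * (1 - q) * mean_sq_dist k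
     + (1 + 2/q) * ((\<gamma> k)\<^sup>2 * (8 * (\<integral>\<omega>. (norm (G k \<omega>))\<^sup>2 \<partial>M) + 2 * (\<integral>\<omega>. (norm (H k \<omega>))\<^sup>2 \<partial>M)))"
proof -
  define \<epsilon> where "\<epsilon> = q / 2"
  have \<epsilon>: "\<epsilon> > 0" "1 / \<epsilon> = 2 / q" unfolding \<epsilon>_def using q_pos by simp_all
  let ?r = "\<lambda>\<omega>. proj_residual (l k \<omega>) (x k \<omega>)"
  let ?S = "\<lambda>\<omega>. (\<gamma> k)\<^sup>2 * (8 * (norm (G k \<omega>))\<^sup>2 + 2 * (norm (H k \<omega>))\<^sup>2)"
  note int_d = integrable_dist_X_sq and r = expected_proj_residual_ge[of k]
  have int_S: "integrable M ?S"
    using second_moment_G(1)[OF int_d] second_moment_H(1)[OF int_d] by simp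
  have "(\<integral>\<omega>. (dist_X (Suc k) \<omega>)\<^sup>2 + (1 + \<epsilon>) * ?r \<omega> \<partial>M)
      \<le> (\<integral>\<omega>. (1 + \<epsilon>) * (dist_X k \<omega>)\<^sup>2 + (1 + 1/\<epsilon>) * ?S \<omega> \<partial>M)"
    using int_d int_S r(1) dist_X_step[OF _ \<epsilon>(1)] by (intro integral_mono) auto
  also have "\<dots> = (1 + \<epsilon>) * mean_sq_dist k + (1 + 2/q) * (\<integral>\<omega>. ?S \<omega> \<partial>M)"
    using int_d int_S \<epsilon>(2) unfolding mean_sq_dist_def by simp
  also have "(\<integral>\<omega>. ?S \<omega> \<partial>M)
      = (\<gamma> k)\<^sup>2 * (8 * (\<integral>\<omega>. (norm (G k \<omega>))\<^sup>2 \<partial>M) + 2 * (\<integral>\<omega>. (norm (H k \<omega>))\<^sup>2 \<partial>M))"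
    using second_moment_G(1)[OF int_d] second_moment_H(1)[OF int_d] by simp
  finally have "mean_sq_dist (Suc k) + (1 + \<epsilon>) * (\<integral>\<omega>. ?r \<omega> \<partial>M) \<le> (1 + \<epsilon>) * mean_sq_dist k
      + (1 + 2/q) * ((\<gamma> k)\<^sup>2 * (8 * (\<integral>\<omega>. (norm (G k \<omega>))\<^sup>2 \<partial>M) + 2 * (\<integral>\<omega>. (norm (H k \<omega>))\<^sup>2 \<partial>M)))"
    using int_d r(1) unfolding mean_sq_dist_def by simp
  moreover have "(1 + \<epsilon>) * (q * mean_sq_dist k) \<le> (1 + \<epsilon>) * (\<integral>\<omega>. ?r \<omega> \<partial>M)"
    using r(2) \<epsilon>(1) by simp
  moreover have "(1 + \<epsilon>) * mean_sq_dist k - (1 + \<epsilon>) * (q * mean_sq_dist k)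
      = (1 + q/2) * (1 - q) * mean_sq_dist k"
    unfolding \<epsilon>_def by (simp add: field_simps)
  ultimately show ?thesis by linarith
qed

lemma sample_moments_linear:
  assumes \<Gamma>: "\<And>k. \<gamma> k \<le> \<Gamma>"
  obtains \<mu>0 \<mu>1 where "0 \<le> \<mu>0" "0 \<le> \<mu>1"
    "\<And>k. 8 * (\<integral>\<omega>. (norm (G k \<omega>))\<^sup>2 \<partial>M) + 2 * (\<integral>\<omega>. (norm (H k \<omega>))\<^sup>2 \<partial>M) \<le> \<mu>0 + \<mu>1 * mean_sq_dist k"
proof -
  define e0 where "e0 = 4 * c0 + 8 * c1 * D\<^sup>2"
  define e1 where "e1 = 8 * c1"
  define h0 where "h0 = 4 * c0 + 16 * c1 * D\<^sup>2 + 8 * c1 * \<Gamma>\<^sup>2 * e0"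
  define h1 where "h1 = 16 * c1 + 8 * c1 * \<Gamma>\<^sup>2 * e1"
  have nonneg: "0 \<le> e0" "0 \<le> e1" "0 \<le> h0" "0 \<le> h1"
    unfolding e0_def e1_def h0_def h1_def using c0_nonneg c1_nonneg by simp_all
  have "8 * (\<integral>\<omega>. (norm (G k \<omega>))\<^sup>2 \<partial>M) + 2 * (\<integral>\<omega>. (norm (H k \<omega>))\<^sup>2 \<partial>M)
      \<le> (8 * e0 + 2 * h0) + (8 * e1 + 2 * h1) * mean_sq_dist k" for k
  proof -
    note G = second_moment_G(2)[OF integrable_dist_X_sq, of k]
      and H = second_moment_H(2)[OF integrable_dist_X_sq, of k]
    let ?EG = "\<integral>\<omega>. (norm (G k \<omega>))\<^sup>2 \<partial>M"
    have EG: "?EG \<le> e0 + e1 * mean_sq_dist k"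
      using G unfolding e0_def e1_def by (simp add: algebra_simps)
    have "(\<gamma> k)\<^sup>2 \<le> \<Gamma>\<^sup>2" using \<Gamma>[of k] \<gamma>_pos by (meson less_imp_le power_mono)
    then have "(\<gamma> k)\<^sup>2 * ?EG \<le> \<Gamma>\<^sup>2 * (e0 + e1 * mean_sq_dist k)"
      using EG by (intro mult_mono) (auto intro: order_trans[OF _ EG] simp: integral_nonneg_AE)
    then have "c1 * ((\<gamma> k)\<^sup>2 * ?EG) \<le> c1 * (\<Gamma>\<^sup>2 * (e0 + e1 * mean_sq_dist k))"
      using c1_nonneg by (rule mult_left_mono)
    then have "(\<integral>\<omega>. (norm (H k \<omega>))\<^sup>2 \<partial>M) \<le> h0 + h1 * mean_sq_dist k"
      using H unfolding h0_def h1_def by (simp add: algebra_simps)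
    then show ?thesis using EG by (simp add: algebra_simps)
  qed
  with nonneg show ?thesis by (intro that[of "8 * e0 + 2 * h0" "8 * e1 + 2 * h1"]) simp_all
qed

lemma mean_sq_dist_recursion:
  assumes "\<And>k. \<gamma> k \<le> \<Gamma>"
  obtains \<theta> B0 B1 where "perturbed_contraction mean_sq_dist (\<lambda>k. (\<gamma> k)\<^sup>2) \<theta> B0 B1"
proof -
  obtain \<mu>0 \<mu>1 where \<mu>: "0 \<le> \<mu>0" "0 \<le> \<mu>1"
    "\<And>k. 8 * (\<integral>\<omega>. (norm (G k \<omega>))\<^sup>2 \<partial>M) + 2 * (\<integral>\<omega>. (norm (H k \<omega>))\<^sup>2 \<partial>M) \<le> \<mu>0 + \<mu>1 * mean_sq_dist k"
    using sample_moments_linear[OF assms] by blast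
  define \<theta> where "\<theta> = max 0 ((1 + q/2) * (1 - q))"
  have \<theta>: "0 \<le> \<theta>" "\<theta> < 1" unfolding \<theta>_def using q_pos by (auto simp: algebra_simps add_pos_pos)
  have "mean_sq_dist (Suc k)
      \<le> \<theta> * mean_sq_dist k + (\<gamma> k)\<^sup>2 * ((1 + 2/q) * \<mu>0 + (1 + 2/q) * \<mu>1 * mean_sq_dist k)" for k
  proof -
    have "(1 + q/2) * (1 - q) * mean_sq_dist k \<le> \<theta> * mean_sq_dist k"
      unfolding \<theta>_def using mean_sq_dist_nonneg by (intro mult_right_mono) auto
    moreover have "(1 + 2/q) * ((\<gamma> k)\<^sup>2 *
        (8 * (\<integral>\<omega>. (norm (G k \<omega>))\<^sup>2 \<partial>M) + 2 * (\<integral>\<omega>. (norm (H k \<omega>))\<^sup>2 \<partial>M)))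
        \<le> (1 + 2/q) * ((\<gamma> k)\<^sup>2 * (\<mu>0 + \<mu>1 * mean_sq_dist k))"
      using \<mu>(3) q_pos by (intro mult_left_mono) auto
    ultimately show ?thesis using mean_sq_dist_step[of k] by (simp add: algebra_simps)
  qed
  then show ?thesis
    using \<theta> \<mu> q_pos mean_sq_dist_nonneg
    by (intro that[of \<theta> "(1 + 2/q) * \<mu>0" "(1 + 2/q) * \<mu>1"]) (unfold_locales, auto)
qed

lemma dist_X_tendsto_0_AE:
  assumes summable: "summable (\<lambda>k. (\<gamma> k)\<^sup>2)"
  shows "AE \<omega> in M. (\<lambda>k. infdist (x k \<omega>) X) \<longlonglongrightarrow> 0"
proof -
  have "\<gamma> k \<le> sqrt (\<Sum>k. (\<gamma> k)\<^sup>2)" for k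
  proof -
    have "(\<gamma> k)\<^sup>2 \<le> (\<Sum>k. (\<gamma> k)\<^sup>2)"
      using summable by (intro sum_le_suminf[of _ "{k}", simplified]) auto
    then show ?thesis using \<gamma>_pos real_le_rsqrt by (simp add: less_imp_le)
  qed
  then obtain \<theta> B0 B1 where "perturbed_contraction mean_sq_dist (\<lambda>k. (\<gamma> k)\<^sup>2) \<theta> B0 B1"
    using mean_sq_dist_recursion by blast
  then have "summable mean_sq_dist" using perturbed_contraction.summable summable by blast
  then have "AE \<omega> in M. summable (\<lambda>k. (dist_X k \<omega>)\<^sup>2)"
    using integrable_dist_X_sq unfolding mean_sq_dist_def
    by (intro AE_summable_of_summable_integral) auto
  then show ?thesis
  proof (rule AE_mp, intro AE_I2 impI)
    fix \<omega> assume "summable (\<lambda>k. (dist_X k \<omega>)\<^sup>2)"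
    then have "(\<lambda>k. sqrt ((dist_X k \<omega>)\<^sup>2)) \<longlonglongrightarrow> sqrt 0"
      by (intro tendsto_real_sqrt summable_LIMSEQ_zero)
    then show "(\<lambda>k. infdist (x k \<omega>) X) \<longlonglongrightarrow> 0" by (simp add: dist_X_def infdist_nonneg)
  qed
qed

lemma expected_dist_X_le:
  assumes "mean_sq_dist k \<le> C * (\<gamma> k)\<^sup>2" and "C > 0"
  shows "integrable M (\<lambda>\<omega>. infdist (x k \<omega>) X)" "(\<integral>\<omega>. infdist (x k \<omega>) X \<partial>M) \<le> sqrt C * \<gamma> k"
proof -
  have "mean_sq_dist k \<le> (sqrt C * \<gamma> k)\<^sup>2" using assms by (simp add: power_mult_distrib)
  moreover have "0 < sqrt C * \<gamma> k" using \<gamma>_pos assms(2) by simp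
  moreover have "0 \<le> dist_X k \<omega>" for \<omega> by (simp add: dist_X_def infdist_nonneg)
  ultimately have "integrable M (dist_X k)" "(\<integral>\<omega>. dist_X k \<omega> \<partial>M) \<le> sqrt C * \<gamma> k"
    using integral_le_of_integral_power2_le[OF dist_X_measurable _ integrable_dist_X_sq]
    unfolding mean_sq_dist_def by blast+
  then show "integrable M (\<lambda>\<omega>. infdist (x k \<omega>) X)" "(\<integral>\<omega>. infdist (x k \<omega>) X \<partial>M) \<le> sqrt C * \<gamma> k"
    unfolding dist_X_def[abs_def] by simp_all
qed

lemma expected_dist_X_rate:
  assumes t: "t > 0" and \<gamma>: "\<forall>k\<ge>1. \<gamma> k = 1 / real k powr (t / 2)" and k0: "k0 \<ge> 1"
  shows "\<exists>c\<ge>0. \<forall>k\<ge>k0. integrable M (\<lambda>\<omega>. infdist (x k \<omega>) X) \<and>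
            (\<integral>\<omega>. infdist (x k \<omega>) X \<partial>M) \<le> c / real k powr (t / 2)"
proof -
  have \<gamma>_sq: "(\<gamma> k)\<^sup>2 = 1 / real k powr t" if "k \<ge> 1" for k
  proof -
    have "(real k powr (t / 2))\<^sup>2 = real k powr t"
      by (simp add: power2_eq_square powr_add[symmetric])
    then show ?thesis using \<gamma> that by (simp add: power_divide)
  qed
  have "\<gamma> k \<le> max (\<gamma> 0) 1" for k
  proof (cases "k = 0")
    case False
    then have "1 \<le> real k powr (t / 2)" using t by (intro ge_one_powr_ge_zero) auto
    then show ?thesis using \<gamma> False by (simp add: le_max_iff_disj)
  qed simp
  then obtain \<theta> B0 B1 where contraction: "perturbed_contraction mean_sq_dist (\<lambda>k. (\<gamma> k)\<^sup>2) \<theta> B0 B1"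
    using mean_sq_dist_recursion by blast
  have "(\<lambda>k. 1 / real k powr t) \<longlonglongrightarrow> 0"
    using t by (simp add: powr_minus_divide[symmetric] tendsto_neg_powr filterlim_real_sequentially)
  moreover have "eventually (\<lambda>k. 1 / real k powr t = (\<gamma> k)\<^sup>2) sequentially"
    using eventually_ge_at_top[of 1] by eventually_elim (simp add: \<gamma>_sq)
  ultimately have lim: "(\<lambda>k. (\<gamma> k)\<^sup>2) \<longlonglongrightarrow> 0" by (rule Lim_transform_eventually)
  have ratio: "eventually (\<lambda>k. (\<gamma> k)\<^sup>2 \<le> r * (\<gamma> (Suc k))\<^sup>2) sequentially" if "r > 1" for r
    using inverse_powr_ratio_eventually[OF that, of t] eventually_ge_at_top[of 1]
    by eventually_elim (simp add: \<gamma>_sq)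
  have "0 < (\<gamma> k)\<^sup>2" for k using \<gamma>_pos[rule_format, of k] by simp
  then obtain c where c: "\<And>k. mean_sq_dist k \<le> c * (\<gamma> k)\<^sup>2"
    using perturbed_contraction.rate[OF contraction _ lim ratio] by blast
  define C where "C = max c 1"
  have C: "mean_sq_dist k \<le> C * (\<gamma> k)\<^sup>2" "C > 0" for k
    using c[of k] mult_right_mono[of c C "(\<gamma> k)\<^sup>2"] unfolding C_def by simp_all
  have "integrable M (\<lambda>\<omega>. infdist (x k \<omega>) X) \<and>
      (\<integral>\<omega>. infdist (x k \<omega>) X \<partial>M) \<le> sqrt C / real k powr (t / 2)" if "k \<ge> 1" for k
    using expected_dist_X_le[OF C(1)[of k] C(2)] \<gamma>[rule_format, OF that] by simp
  then show ?thesis using k0 by (intro exI[of _ "sqrt C"]) (simp add: C_def)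
qed

lemma expected_infdist_average_le:
  assumes I: "finite I" "I \<noteq> {}"
    and E: "\<And>k. k \<in> I \<Longrightarrow> integrable M (\<lambda>\<omega>. infdist (x k \<omega>) X) \<and> (\<integral>\<omega>. infdist (x k \<omega>) X \<partial>M) \<le> b"
  shows "integrable M (\<lambda>\<omega>. infdist ((1 / (\<Sum>k\<in>I. \<gamma> k)) *\<^sub>R (\<Sum>k\<in>I. \<gamma> k *\<^sub>R x k \<omega>)) X) \<and>
         (\<integral>\<omega>. infdist ((1 / (\<Sum>k\<in>I. \<gamma> k)) *\<^sub>R (\<Sum>k\<in>I. \<gamma> k *\<^sub>R x k \<omega>)) X \<partial>M) \<le> b"
proof -
  define w where "w k = \<gamma> k / (\<Sum>k\<in>I. \<gamma> k)" for k
  have "(\<Sum>k\<in>I. \<gamma> k) > 0" using I \<gamma>_pos by (intro sum_pos) auto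
  then have w: "\<forall>k\<in>I. 0 \<le> w k" "sum w I = 1"
    unfolding w_def using \<gamma>_pos by (auto simp: less_imp_le sum_divide_distrib[symmetric])
  have avg: "(1 / (\<Sum>k\<in>I. \<gamma> k)) *\<^sub>R (\<Sum>k\<in>I. \<gamma> k *\<^sub>R x k \<omega>) = (\<Sum>k\<in>I. w k *\<^sub>R x k \<omega>)" for \<omega>
    unfolding w_def by (simp add: scaleR_sum_right)
  have int_sum: "integrable M (\<lambda>\<omega>. \<Sum>k\<in>I. w k * infdist (x k \<omega>) X)" using E by auto
  have "(\<lambda>\<omega>. infdist (\<Sum>k\<in>I. w k *\<^sub>R x k \<omega>) X) \<in> borel_measurable M" by measurable
  note dom = integrable_dominated[OF int_sum this]
  have le: "0 \<le> infdist (\<Sum>k\<in>I. w k *\<^sub>R x k \<omega>) X \<and>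
      infdist (\<Sum>k\<in>I. w k *\<^sub>R x k \<omega>) X \<le> (\<Sum>k\<in>I. w k * infdist (x k \<omega>) X)" for \<omega>
    using infdist_convex_combination[OF X_convex X_closed X_ne I(1) w, where y = "\<lambda>k. x k \<omega>"]
      infdist_nonneg by blast
  have "(\<integral>\<omega>. infdist (\<Sum>k\<in>I. w k *\<^sub>R x k \<omega>) X \<partial>M) \<le> (\<integral>\<omega>. (\<Sum>k\<in>I. w k * infdist (x k \<omega>) X) \<partial>M)"
    using dom(2) le by simp
  also have "\<dots> = (\<Sum>k\<in>I. w k * (\<integral>\<omega>. infdist (x k \<omega>) X \<partial>M))" using E by simp
  also have "\<dots> \<le> (\<Sum>k\<in>I. w k * b)" using E w(1) by (intro sum_mono mult_left_mono) auto
  also have "\<dots> = b" using w(2) by (simp add: sum_distrib_right[symmetric])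
  finally show ?thesis unfolding avg using dom(1) le by simp
qed

lemma expected_dist_X_average_rate:
  assumes \<gamma>: "\<forall>k\<ge>1. \<gamma> k = 1 / sqrt (real k)" and kb: "kb \<ge> 1"
  shows "\<exists>c. \<forall>K::nat\<ge>1.
    integrable M (\<lambda>\<omega>. infdist ((1 / (\<Sum>k=kb + K div 2..kb + K. \<gamma> k)) *\<^sub>R
                               (\<Sum>k=kb + K div 2..kb + K. \<gamma> k *\<^sub>R x k \<omega>)) X) \<and>
    (\<integral>\<omega>. infdist ((1 / (\<Sum>k=kb + K div 2..kb + K. \<gamma> k)) *\<^sub>R
                               (\<Sum>k=kb + K div 2..kb + K. \<gamma> k *\<^sub>R x k \<omega>)) X \<partial>M) \<le> c / sqrt (real K)"
proof -
  obtain c where "c \<ge> 0" and c: "\<And>k. k \<ge> 1 \<Longrightarrow> integrable M (\<lambda>\<omega>. infdist (x k \<omega>) X) \<and>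
      (\<integral>\<omega>. infdist (x k \<omega>) X \<partial>M) \<le> c / sqrt (real k)"
    using expected_dist_X_rate[of 1 1] \<gamma> by (auto simp: powr_half_sqrt)
  have "integrable M (\<lambda>\<omega>. infdist (x k \<omega>) X) \<and>
      (\<integral>\<omega>. infdist (x k \<omega>) X \<partial>M) \<le> c * sqrt 2 / sqrt (real K)"
    if "k \<in> {kb + K div 2..kb + K}" "K \<ge> 1" for k K
  proof -
    \<comment> \<open>Every index in the second half of the window is at least \<open>K / 2\<close>.\<close>
    have "K \<le> 2 * k" using that kb by auto
    then have "sqrt (real K) \<le> sqrt 2 * sqrt (real k)"
      by (simp add: real_sqrt_mult[symmetric])
    then have "c * sqrt (real K) \<le> c * sqrt 2 * sqrt (real k)"
      using \<open>c \<ge> 0\<close> by (simp add: mult_left_mono mult.assoc)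
    then have "c / sqrt (real k) \<le> c * sqrt 2 / sqrt (real K)"
      using that kb by (simp add: field_simps)
    moreover have "k \<ge> 1" using that kb by simp
    ultimately show ?thesis using c by fastforce
  qed
  then show ?thesis
    by (intro exI[of _ "c * sqrt 2"] allI impI expected_infdist_average_le) auto
qed

lemma kbar_beta_ge_1:
  assumes "t > 0"
  shows "kbar (1 - \<rho>min\<^sup>2 / (64 * (real m)\<^sup>2 * \<eta>\<^sup>2)) t \<ge> 1"
proof (rule kbar_ge_1[OF _ _ assms])
  have "\<rho>min \<le> 1" using \<rho>min_le[of 0] \<rho>_range m_pos by force
  then have "\<rho>min\<^sup>2 \<le> 1" using \<rho>min_pos by (simp add: power_le_one)
  moreover have "1 * 1 \<le> (real m)\<^sup>2 * \<eta>\<^sup>2"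
    using m_pos \<eta>_ge_1 by (intro mult_mono) (simp_all add: one_le_power)
  ultimately have "\<rho>min\<^sup>2 / (64 * (real m)\<^sup>2 * \<eta>\<^sup>2) < 1"
    by (simp add: divide_less_eq mult.assoc)
  moreover have "0 \<le> \<rho>min\<^sup>2 / (64 * (real m)\<^sup>2 * \<eta>\<^sup>2)" by simp
  ultimately show "0 < 1 - \<rho>min\<^sup>2 / (64 * (real m)\<^sup>2 * \<eta>\<^sup>2)"
    "1 - \<rho>min\<^sup>2 / (64 * (real m)\<^sup>2 * \<eta>\<^sup>2) < 2"
    by linarith+
qed

end

theorem proposition5:
  fixes M :: "'w measure"
    and m :: nat and Xs :: "nat \<Rightarrow> 'a::euclidean_space set" and X :: "'a set"
    and D L C \<nu>1 \<nu>2 \<eta> :: real and \<rho> :: "nat \<Rightarrow> real"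
    and F :: "'a \<Rightarrow> 'a"
    and x xh G H :: "nat \<Rightarrow> 'w \<Rightarrow> 'a" and l :: "nat \<Rightarrow> 'w \<Rightarrow> nat"
    and \<gamma> :: "nat \<Rightarrow> real" and x0 :: 'a
  assumes prob: "prob_space M"
    and m_pos: "m \<ge> 1"
    and X_def: "X = (\<Inter>i<m. Xs i)"
    and Xs_closed: "\<forall>i<m. closed (Xs i)" and Xs_convex: "\<forall>i<m. convex (Xs i)"
    and X_ne: "X \<noteq> {}"
    and D_pos: "D > 0" and diam: "\<forall>u\<in>X. \<forall>v\<in>X. (norm (u - v))\<^sup>2 \<le> D\<^sup>2"
    \<comment> \<open>(A1)\<close>
    and Lip: "\<forall>u v. norm (F u - F v) \<le> L * norm (u - v)"
    and mono: "\<forall>u v. (F u - F v) \<bullet> (u - v) \<ge> 0"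
    \<comment> \<open>(A2)\<close>
    and sol_ne: "VI_sol X F \<noteq> {}" and sol_compact: "compact (VI_sol X F)"
    and sol_bound: "\<forall>xs\<in>VI_sol X F. norm (F xs) \<le> C"
    \<comment> \<open>random variables\<close>
    and G_meas: "\<forall>k. G k \<in> borel_measurable M" and H_meas: "\<forall>k. H k \<in> borel_measurable M"
    and l_meas: "\<forall>k. l k \<in> measurable M (count_space UNIV)"
    and l_range: "\<forall>k. \<forall>\<omega>\<in>space M. l k \<omega> < m"
    \<comment> \<open>(A4)\<close>
    and \<nu>_nonneg: "\<nu>1 \<ge> 0" "\<nu>2 \<ge> 0"
    and noise1: "\<forall>k. cond_mean_zero M (hist_F M G H l k) (\<lambda>\<omega>. G k \<omega> - F (x k \<omega>))"
    and noise1m: "\<forall>k. cond_second_moment_le M (hist_F M G H l k) (\<lambda>\<omega>. G k \<omega> - F (x k \<omega>)) (x k) \<nu>1 \<nu>2"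
    and noise2: "\<forall>k. cond_mean_zero M (hist_Fh M G H l k) (\<lambda>\<omega>. H k \<omega> - F (xh k \<omega>))"
    and noise2m: "\<forall>k. cond_second_moment_le M (hist_Fh M G H l k) (\<lambda>\<omega>. H k \<omega> - F (xh k \<omega>)) (xh k) \<nu>1 \<nu>2"
    \<comment> \<open>(A5)\<close>
    and \<eta>_pos: "\<eta> > 0"
    and linreg: "\<forall>z. (norm (z - closest_point X z))\<^sup>2
                    \<le> \<eta> * Max ((\<lambda>i. (norm (z - closest_point (Xs i) z))\<^sup>2) ` {..<m})"
    \<comment> \<open>(A6)\<close>
    and \<rho>_range: "\<forall>i<m. 0 < \<rho> i \<and> \<rho> i \<le> 1"
    and sampling: "\<forall>i<m. \<forall>k. AE \<omega> in M.
                     real_cond_exp M (hist_F M G H l k) (indicator {\<omega>\<in>space M. l k \<omega> = i}) \<omega> \<ge> \<rho> i / m"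
    \<comment> \<open>the r-SSE iteration\<close>
    and \<gamma>_pos: "\<forall>k. \<gamma> k > 0"
    and x_init: "\<forall>\<omega>\<in>space M. x 0 \<omega> = x0"
    and step_half: "\<forall>k. \<forall>\<omega>\<in>space M.
                      xh k \<omega> = closest_point (Xs (l k \<omega>)) (x k \<omega> - \<gamma> k *\<^sub>R G k \<omega>)"
    and step_full: "\<forall>k. \<forall>\<omega>\<in>space M.
                      x (Suc k) \<omega> = closest_point
                        {y. (x k \<omega> - \<gamma> k *\<^sub>R G k \<omega> - xh k \<omega>) \<bullet> (y - xh k \<omega>) \<le> 0}
                        (x k \<omega> - \<gamma> k *\<^sub>R H k \<omega>)"
  shows
    "let \<rho>min = Min (\<rho> ` {..<m});
         \<beta> = 1 - \<rho>min\<^sup>2 / (64 * (real m)\<^sup>2 * \<eta>\<^sup>2)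
     in
     ((\<not> summable \<gamma> \<and> summable (\<lambda>k. (\<gamma> k)\<^sup>2)) \<longrightarrow>
        (AE \<omega> in M. (\<lambda>k. infdist (x k \<omega>) X) \<longlonglongrightarrow> 0))
   \<and> (\<forall>t::real. t \<ge> 1 \<longrightarrow> (\<forall>k\<ge>1. \<gamma> k = 1 / real k powr (t / 2)) \<longrightarrow>
        (\<exists>c. \<forall>k\<ge>kbar \<beta> t.
            integrable M (\<lambda>\<omega>. infdist (x k \<omega>) X) \<and>
            prob_space.expectation M (\<lambda>\<omega>. infdist (x k \<omega>) X) \<le> c / real k powr (t / 2)))
   \<and> ((\<forall>k\<ge>1. \<gamma> k = 1 / sqrt (real k)) \<longrightarrow>
        (\<exists>c. \<forall>K::nat\<ge>1.
            (let kb = kbar \<beta> 1;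
                 xbar = (\<lambda>\<omega>. (1 / (\<Sum>k=kb + K div 2..kb + K. \<gamma> k)) *\<^sub>R
                               (\<Sum>k=kb + K div 2..kb + K. \<gamma> k *\<^sub>R x k \<omega>))
             in integrable M (\<lambda>\<omega>. infdist (xbar \<omega>) X) \<and>
                prob_space.expectation M (\<lambda>\<omega>. infdist (xbar \<omega>) X) \<le> c / sqrt (real K))))"
proof -
  interpret rsse M m Xs X D L \<nu>1 \<nu>2 \<eta> \<rho> F x xh G H l \<gamma> x0
    by (rule rsse.intro[OF prob m_pos X_def Xs_closed Xs_convex X_ne D_pos diam Lip G_meas H_meas
          l_meas l_range noise1m noise2m \<eta>_pos linreg \<rho>_range sampling \<gamma>_pos x_init
          step_half step_full])
  show ?thesis
    unfolding Let_def \<rho>min_def[symmetric]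
  proof (intro conjI impI allI, goal_cases)
    case 1
    then show ?case using dist_X_tendsto_0_AE by blast
  next
    case (2 t)
    then show ?case using expected_dist_X_rate[OF _ _ kbar_beta_ge_1, of t t] by auto
  next
    case 3
    then show ?case using expected_dist_X_average_rate[OF _ kbar_beta_ge_1[of 1]] by simp
  qed
qed

end
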